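(* For $n\ge2$, there is a well-defined surjective homomorphism $\psi_H:TVH_n\to A_n$ with $\psi_H(x_{kl})=e$ ($1\le k\ne l\le n$) and $\psi_H(\gamma_j)=\gamma_j$, which is the identity on $A_n$. Its kernel $HL_n=\ker\psi_H$ is generated by the elements $x_{ij}^{(0)}=x_{ij}$, $x_{ij}^{(i)}=x_{ij}^{\gamma_i}$, $x_{ij}^{(j)}=x_{ij}^{\gamma_j}$, $x_{ij}^{(ij)}=x_{ij}^{\gamma_i\gamma_j}$ for $1\le i<j\le n$, and $TVH_n=HL_n\rtimes A_n$.
   Context: For $n\ge 2$, the twisted virtual braid group $TVB_n$ is the group with generators $\sigma_1,\dots,\sigma_{n-1}$, $\rho_1,\dots,\rho_{n-1}$, $\gamma_1,\dots,\gamma_n$ and defining relations: $\sigma_i\sigma_{i+1}\sigma_i=\sigma_{i+1}\sigma_i\sigma_{i+1}$ ($1\le i\le n-2$); $\sigma_i\sigma_j=\sigma_j\sigma_i$ ($|i-j|\ge 2$); $\rho_i^2=1$; $\rho_i\rho_j=\rho_j\rho_i$ ($|i-j|\ge2$); $\rho_i\rho_{i+1}\rho_i=\rho_{i+1}\rho_i\rho_{i+1}$ ($1\le i\le n-2$); $\sigma_i\rho_j=\rho_j\sigma_i$ ($|i-j|\ge 2$); $\rho_i\rho_{i+1}\sigma_i=\sigma_{i+1}\rho_i\rho_{i+1}$ ($1\le i\le n-2$); $\gamma_i^2=1$ and $\gamma_i\gamma_j=\gamma_j\gamma_i$ (all $i,j$); $\gamma_j\rho_i=\rho_i\gamma_j$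 and $\gamma_j\sigma_i=\sigma_i\gamma_j$ for $j\notin\{i,i+1\}$; $\rho_i\gamma_i=\gamma_{i+1}\rho_i$ ($1\le i\le n-1$); $\rho_i\sigma_i\rho_i=\gamma_{i+1}\gamma_i\sigma_i\gamma_i\gamma_{i+1}$ ($1\le i\le n-1$). $\varphi_H:TVB_n\to S_n$ is the homomorphism with $\sigma_i\mapsto e$, $\rho_i\mapsto(i,i+1)$, $\gamma_j\mapsto e$, and $TVH_n=\ker\varphi_H$. $A_n=\langle\gamma_1,\dots,\gamma_n\rangle\le TVH_n$. In $TVB_n$ define $x_{i,i+1}=\sigma_i$, $x_{i+1,i}=\rho_i\sigma_i\rho_i$ ($1\le i\le n-1$), and for $1\le i<j-1\le n-1$: $x_{ij}=\rho_{j-1}\cdots\rho_{i+1}\sigma_i\rho_{i+1}\cdots\rho_{j-1}$, $x_{ji}=\rho_{j-1}\cdots\rho_{i+1}\rho_i\sigma_i\rho_i\rho_{i+1}\cdots\rho_{j-1}$; the $x_{kl}$ and $\gamma_j$ generate $TVH_n$. Conjugation notation: $a^b=b^{-1}ab$. *)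

theory Defs
  imports "HOL-Algebra.Algebra" "HOL-Algebra.Sym_Groups"
begin

datatype gen = Sg nat | Rg nat | Gg nat

text \<open>A letter is a generator together with an exponent sign (True = +1, False = -1).\<close>
type_synonym letter = "gen \<times> bool"
type_synonym word = "letter list"

fun valid_gen :: "nat \<Rightarrow> gen \<Rightarrow> bool" where
  "valid_gen n (Sg i) = (1 \<le> i \<and> i \<le> n - 1)"
| "valid_gen n (Rg i) = (1 \<le> i \<and> i \<le> n - 1)"
| "valid_gen n (Gg j) = (1 \<le> j \<and> j \<le> n)"

definition words :: "nat \<Rightarrow> word set" where
  "words n = {w. \<forall>x\<in>set w. valid_gen n (fst x)}"

definition inv_letter :: "letter \<Rightarrow> letter" where
  "inv_letter x = (fst x, \<not> snd x)"

abbreviation sw :: "nat \<Rightarrow> word" where "sw i \<equiv> [(Sg i, True)]"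
abbreviation rw :: "nat \<Rightarrow> word" where "rw i \<equiv> [(Rg i, True)]"
abbreviation gw :: "nat \<Rightarrow> word" where "gw i \<equiv> [(Gg i, True)]"

text \<open>Defining relations (as pairs lhs = rhs), together with free cancellation.\<close>
definition tvb_rels :: "nat \<Rightarrow> (word \<times> word) set" where
  "tvb_rels n =
     {([x, inv_letter x], []) | x. valid_gen n (fst x)}
   \<union> {(sw i @ sw (i+1) @ sw i, sw (i+1) @ sw i @ sw (i+1)) | i. 1 \<le> i \<and> i \<le> n - 2}
   \<union> {(sw i @ sw j, sw j @ sw i) | i j. 1 \<le> i \<and> i \<le> n - 1 \<and> 1 \<le> j \<and> j \<le> n - 1 \<and> (i + 2 \<le> j \<or> j + 2 \<le> i)}
   \<union> {(rw i @ rw i, []) | i. 1 \<le> i \<and> i \<le> n - 1}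
   \<union> {(rw i @ rw j, rw j @ rw i) | i j. 1 \<le> i \<and> i \<le> n - 1 \<and> 1 \<le> j \<and> j \<le> n - 1 \<and> (i + 2 \<le> j \<or> j + 2 \<le> i)}
   \<union> {(rw i @ rw (i+1) @ rw i, rw (i+1) @ rw i @ rw (i+1)) | i. 1 \<le> i \<and> i \<le> n - 2}
   \<union> {(sw i @ rw j, rw j @ sw i) | i j. 1 \<le> i \<and> i \<le> n - 1 \<and> 1 \<le> j \<and> j \<le> n - 1 \<and> (i + 2 \<le> j \<or> j + 2 \<le> i)}
   \<union> {(rw i @ rw (i+1) @ sw i, sw (i+1) @ rw i @ rw (i+1)) | i. 1 \<le> i \<and> i \<le> n - 2}
   \<union> {(gw i @ gw i, []) | i. 1 \<le> i \<and> i \<le> n}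
   \<union> {(gw i @ gw j, gw j @ gw i) | i j. 1 \<le> i \<and> i \<le> n \<and> 1 \<le> j \<and> j \<le> n}
   \<union> {(gw j @ rw i, rw i @ gw j) | i j. 1 \<le> i \<and> i \<le> n - 1 \<and> 1 \<le> j \<and> j \<le> n \<and> j \<noteq> i \<and> j \<noteq> i + 1}
   \<union> {(gw j @ sw i, sw i @ gw j) | i j. 1 \<le> i \<and> i \<le> n - 1 \<and> 1 \<le> j \<and> j \<le> n \<and> j \<noteq> i \<and> j \<noteq> i + 1}
   \<union> {(rw i @ gw i, gw (i+1) @ rw i) | i. 1 \<le> i \<and> i \<le> n - 1}
   \<union> {(rw i @ sw i @ rw i, gw (i+1) @ gw i @ sw i @ gw i @ gw (i+1)) | i. 1 \<le> i \<and> i \<le> n - 1}"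

inductive_set tvb_eq :: "nat \<Rightarrow> (word \<times> word) set" for n where
  refl: "w \<in> words n \<Longrightarrow> (w, w) \<in> tvb_eq n"
| sym: "(u, v) \<in> tvb_eq n \<Longrightarrow> (v, u) \<in> tvb_eq n"
| trans: "(u, v) \<in> tvb_eq n \<Longrightarrow> (v, w) \<in> tvb_eq n \<Longrightarrow> (u, w) \<in> tvb_eq n"
| rel: "(l, r) \<in> tvb_rels n \<Longrightarrow> u \<in> words n \<Longrightarrow> v \<in> words n \<Longrightarrow> (u @ l @ v, u @ r @ v) \<in> tvb_eq n"

definition cls :: "nat \<Rightarrow> word \<Rightarrow> word set" where
  "cls n w = tvb_eq n `` {w}"

definition TVB :: "nat \<Rightarrow> word set monoid" where
  "TVB n = \<lparr> carrier = words n // tvb_eq n,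
             monoid.mult = (\<lambda>A B. \<Union>a\<in>A. \<Union>b\<in>B. cls n (a @ b)),
             one = cls n [] \<rparr>"

definition sigma :: "nat \<Rightarrow> nat \<Rightarrow> word set" where "sigma n i = cls n (sw i)"
definition rho :: "nat \<Rightarrow> nat \<Rightarrow> word set" where "rho n i = cls n (rw i)"
definition gamma :: "nat \<Rightarrow> nat \<Rightarrow> word set" where "gamma n j = cls n (gw j)"

definition word_perm :: "word \<Rightarrow> nat \<Rightarrow> nat" where
  "word_perm w = foldr (\<lambda>x p. case fst x of Rg i \<Rightarrow> Transposition.transpose i (i+1) \<circ> p | _ \<Rightarrow> p) w id"

definition phiH :: "word set \<Rightarrow> nat \<Rightarrow> nat" where
  "phiH C = word_perm (SOME w. w \<in> C)"

definition TVH_set :: "nat \<Rightarrow> word set set" where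
  "TVH_set n = kernel (TVB n) (sym_group n) phiH"

definition TVH :: "nat \<Rightarrow> word set monoid" where
  "TVH n = (TVB n)\<lparr>carrier := TVH_set n\<rparr>"

definition A_set :: "nat \<Rightarrow> word set set" where
  "A_set n = generate (TVB n) {gamma n j | j. 1 \<le> j \<and> j \<le> n}"

definition A_grp :: "nat \<Rightarrow> word set monoid" where
  "A_grp n = (TVB n)\<lparr>carrier := A_set n\<rparr>"

definition rup :: "nat \<Rightarrow> nat \<Rightarrow> word" where
  "rup i j = map (\<lambda>k. (Rg k, True)) [i..<j]"

definition xw :: "nat \<Rightarrow> nat \<Rightarrow> word" where
  "xw i j = (if i < j then rev (rup (i+1) j) @ sw i @ rup (i+1) j
             else rev (rup j i) @ sw j @ rup j i)"

definition xg :: "nat \<Rightarrow> nat \<Rightarrow> nat \<Rightarrow> word set" where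
  "xg n i j = cls n (xw i j)"

definition conjB :: "nat \<Rightarrow> word set \<Rightarrow> word set \<Rightarrow> word set" where
  "conjB n a b = inv\<^bsub>TVB n\<^esub> b \<otimes>\<^bsub>TVB n\<^esub> a \<otimes>\<^bsub>TVB n\<^esub> b"

definition HL_gens :: "nat \<Rightarrow> word set set" where
  "HL_gens n = (\<Union>i\<in>{1..n}. \<Union>j\<in>{i<..n}.
     {xg n i j, conjB n (xg n i j) (gamma n i), conjB n (xg n i j) (gamma n j),
      conjB n (xg n i j) (gamma n i \<otimes>\<^bsub>TVB n\<^esub> gamma n j)})"

end

theory Submission
  imports Defs
begin

text \<open>
  Every generator acts on \<open>{1..n} \<times> bool\<close>: \<open>\<sigma>\<^sub>i\<close> trivially, \<open>\<rho>\<^sub>i\<close> by the transposition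
  \<open>(i, i+1)\<close> of the first component and \<open>\<gamma>\<^sub>j\<close> by flipping the sign at \<open>j\<close>. The relations
  are respected, so this is a homomorphism from \<open>TVB\<^sub>n\<close> to the hyperoctahedral group; on
  \<open>TVH\<^sub>n\<close> it only records which signs get flipped. Sending a flip pattern to the corresponding
  product of the \<open>\<gamma>\<^sub>j\<close> defines \<open>\<psi>\<^sub>H\<close>, which fixes \<open>A\<^sub>n\<close> pointwise; this gives the splitting
  \<open>TVH\<^sub>n = ker \<psi>\<^sub>H \<cdot> A\<^sub>n\<close>.

  The kernel is identified by two rewriting arguments. First, the action is faithful on the
  subgroup generated by the \<open>\<rho>\<^sub>i\<close> and \<open>\<gamma>\<^sub>j\<close>: a \<open>\<sigma>\<close>-free word can be brought to the normal
  form \<open>(\<gamma>-word)(\<rho>-word)\<close>, and a \<open>\<rho>\<close>-word inducing the identity permutation is trivial by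
  the Coxeter presentation of \<open>S\<^sub>n\<close>. Second, deleting the \<open>\<sigma>\<close>-letters of a word one at a time
  multiplies it by conjugates \<open>d \<sigma>\<^sub>i\<^bsup>\<plusminus>1\<^esup> d\<^bsup>-1\<^esup>\<close> with \<open>d\<close> \<open>\<sigma>\<close>-free. Conjugation by \<open>\<rho>\<^sub>m\<close> maps
  \<open>x\<^sub>k\<^sub>l\<close> to \<open>x\<^bsub>s(k) s(l)\<^esub>\<close> for the transposition \<open>s = (m, m+1)\<close>, and conjugation by \<open>\<gamma>\<^sub>m\<close>
  fixes \<open>x\<^sub>k\<^sub>l\<close> unless \<open>m \<in> {k, l}\<close>; hence each such conjugate is \<open>x\<^sub>k\<^sub>l\<close> twisted by an
  element of \<open>\<langle>\<gamma>\<^sub>k, \<gamma>\<^sub>l\<rangle>\<close>, a generator of \<open>HL\<^sub>n\<close> or its inverse. An element of the kernel is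
  therefore a product of these generators times a \<open>\<sigma>\<close>-free word acting trivially, which is
  \<open>1\<close> by faithfulness.
\<close>

lemma tvb_rels_words: "(l,r) \<in> tvb_rels n \<Longrightarrow> l \<in> words n \<and> r \<in> words n"
  unfolding tvb_rels_def words_def inv_letter_def by (elim UnE; force)

lemma tvb_eq_words: "(u,v) \<in> tvb_eq n \<Longrightarrow> u \<in> words n \<and> v \<in> words n"
  by (induction rule: tvb_eq.induct) (fastforce simp: words_def dest!: tvb_rels_words)+

lemma words_append[simp]: "u @ v \<in> words n \<longleftrightarrow> u \<in> words n \<and> v \<in> words n"
  by (auto simp: words_def)

lemma words_Cons[simp]: "x # v \<in> words n \<longleftrightarrow> valid_gen n (fst x) \<and> v \<in> words n"
  by (auto simp: words_def)

lemma words_Nil[simp]: "[] \<in> words n"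
  by (auto simp: words_def)

lemma valid_gen_simps[simp]: "valid_gen n (Rg i) = (1 \<le> i \<and> i < n)" "valid_gen n (Sg i) = (1 \<le> i \<and> i < n)"
  "valid_gen n (Gg i) = (1 \<le> i \<and> i \<le> n)" by auto
declare valid_gen.simps[simp del]

lemma words_rw[simp]: "rw i \<in> words n \<longleftrightarrow> 1 \<le> i \<and> i < n" by auto

lemma words_gw[simp]: "gw i \<in> words n \<longleftrightarrow> 1 \<le> i \<and> i \<le> n" by auto

lemma equiv_tvb_eq: "equiv (words n) (tvb_eq n)"
proof (rule equivI)
  show "refl_on (words n) (tvb_eq n)" unfolding refl_on_def by (auto dest: tvb_eq_words intro: tvb_eq.refl)
  show "sym (tvb_eq n)" unfolding sym_def using tvb_eq.sym by blast
  show "trans (tvb_eq n)" unfolding trans_def using tvb_eq.trans by blast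
  show "tvb_eq n \<subseteq> words n \<times> words n" using tvb_eq_words by auto
qed

lemma tvb_eq_app_right: "(u,v) \<in> tvb_eq n \<Longrightarrow> w \<in> words n \<Longrightarrow> (u@w, v@w) \<in> tvb_eq n"
proof (induction rule: tvb_eq.induct)
  case (rel l r u v)
  then show ?case using tvb_eq.rel[of l r n u "v@w"] by simp
qed (auto intro: tvb_eq.intros)

lemma tvb_eq_app_left: "(u,v) \<in> tvb_eq n \<Longrightarrow> w \<in> words n \<Longrightarrow> (w@u, w@v) \<in> tvb_eq n"
proof (induction rule: tvb_eq.induct)
  case (rel l r u v)
  then show ?case using tvb_eq.rel[of l r n "w@u" v] by simp
qed (auto intro: tvb_eq.intros)

lemma tvb_eq_app: "(u,v) \<in> tvb_eq n \<Longrightarrow> (u',v') \<in> tvb_eq n \<Longrightarrow> (u@u', v@v') \<in> tvb_eq n"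
  by (meson tvb_eq.trans tvb_eq_app_left tvb_eq_app_right tvb_eq_words)

lemma cls_not_word: "u \<notin> words n \<Longrightarrow> cls n u = {}"
  unfolding cls_def using tvb_eq_words by blast

lemma cls_self: "u \<in> words n \<Longrightarrow> u \<in> cls n u"
  unfolding cls_def by (auto intro: tvb_eq.refl)

lemma cls_mem: "v \<in> cls n u \<longleftrightarrow> (u,v) \<in> tvb_eq n"
  unfolding cls_def by auto

lemma cls_eq_iff: "u \<in> words n \<Longrightarrow> cls n u = cls n v \<longleftrightarrow> (u,v) \<in> tvb_eq n"
proof (cases "v \<in> words n")
  case True
  assume "u \<in> words n"
  then show ?thesis using eq_equiv_class_iff[OF equiv_tvb_eq, of u n v] True unfolding cls_def by simp
next
  case False
  assume u: "u \<in> words n"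
  then have "cls n u \<noteq> cls n v" using cls_not_word[OF False] cls_self[OF u] by auto
  moreover have "(u,v) \<notin> tvb_eq n" using False tvb_eq_words by blast
  ultimately show ?thesis by simp
qed

lemma cls_eq_iff_general: "cls n u = cls n v \<longleftrightarrow> (u \<notin> words n \<and> v \<notin> words n) \<or> (u,v) \<in> tvb_eq n"
  by (metis cls_eq_iff cls_not_word cls_self empty_iff tvb_eq_words)

lemma cls_append_cong: "cls n u = cls n v \<Longrightarrow> cls n u' = cls n v' \<Longrightarrow> cls n (u @ u') = cls n (v @ v')"
  unfolding cls_eq_iff_general using tvb_eq_app by auto

lemma cls_append_cong3:
  "cls n a = cls n a' \<Longrightarrow> cls n c = cls n c' \<Longrightarrow> cls n (a @ b @ c) = cls n (a' @ b @ c')"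
  by (rule cls_append_cong[OF _ cls_append_cong[OF HOL.refl]])

lemma cls_context: "cls n u = cls n v \<Longrightarrow> cls n (a @ u @ b) = cls n (a @ v @ b)"
  by (rule cls_append_cong[OF HOL.refl cls_append_cong[OF _ HOL.refl]])

lemma cls_append_right: "cls n u = cls n v \<Longrightarrow> cls n (u @ b) = cls n (v @ b)"
  by (rule cls_append_cong[OF _ HOL.refl])

lemma cls_append_left: "cls n u = cls n v \<Longrightarrow> cls n (a @ u) = cls n (a @ v)"
  by (rule cls_append_cong[OF HOL.refl])

lemma cls_rel: "(l,r) \<in> tvb_rels n \<Longrightarrow> cls n l = cls n r"
  using tvb_eq.rel[of l r n "[]" "[]"] cls_eq_iff_general by auto

lemma TVB_carrier: "carrier (TVB n) = cls n ` words n"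
proof -
  have "carrier (TVB n) = words n // tvb_eq n" by (simp add: TVB_def)
  also have "\<dots> = cls n ` words n" unfolding quotient_def cls_def by blast
  finally show ?thesis .
qed

lemma TVB_one: "\<one>\<^bsub>TVB n\<^esub> = cls n []"
  unfolding TVB_def by simp

lemma TVB_mult: "u \<in> words n \<Longrightarrow> v \<in> words n \<Longrightarrow> cls n u \<otimes>\<^bsub>TVB n\<^esub> cls n v = cls n (u@v)"
proof -
  assume u: "u \<in> words n" and v: "v \<in> words n"
  have "\<And>a b. a \<in> cls n u \<Longrightarrow> b \<in> cls n v \<Longrightarrow> cls n (a@b) = cls n (u@v)"
    by (metis cls_append_cong cls_eq_iff cls_mem u v)
  moreover have "u \<in> cls n u" "v \<in> cls n v" using u v cls_self by auto
  ultimately have "(\<Union>a\<in>cls n u. \<Union>b\<in>cls n v. cls n (a@b)) = cls n (u@v)" by blast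
  then show ?thesis by (simp add: TVB_def)
qed

definition inv_word :: "word \<Rightarrow> word" where "inv_word u = rev (map inv_letter u)"

lemma inv_word_words[simp]: "inv_word u \<in> words n \<longleftrightarrow> u \<in> words n"
  by (auto simp: inv_word_def words_def inv_letter_def)

lemma inv_word_append[simp]: "inv_word (u@v) = inv_word v @ inv_word u"
  by (simp add: inv_word_def)

lemma inv_word_Nil[simp]: "inv_word [] = []" by (simp add: inv_word_def)

lemma cls_inv_word_append: "u \<in> words n \<Longrightarrow> cls n (inv_word u @ u) = cls n []"
proof (induction u)
  case Nil then show ?case by simp
next
  case (Cons x u)
  have r: "cls n [inv_letter x, x] = cls n []"
    using cls_rel[of "[inv_letter x, inv_letter (inv_letter x)]" "[]" n] Cons.prems
    by (auto simp: tvb_rels_def inv_letter_def)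
  have "cls n (inv_word (x#u) @ x # u) = cls n (inv_word u @ [inv_letter x, x] @ u)"
    by (simp add: inv_word_def)
  also have "\<dots> = cls n (inv_word u @ [] @ u)" using r Cons.prems by (intro cls_context) auto
  finally show ?case using Cons by simp
qed

lemma group_TVB: "group (TVB n)"
proof (rule groupI)
  fix x y assume "x \<in> carrier (TVB n)" "y \<in> carrier (TVB n)"
  then show "x \<otimes>\<^bsub>TVB n\<^esub> y \<in> carrier (TVB n)" unfolding TVB_carrier
    using TVB_mult by auto
next
  show "\<one>\<^bsub>TVB n\<^esub> \<in> carrier (TVB n)" unfolding TVB_carrier TVB_one by auto
next
  fix x y z assume "x \<in> carrier (TVB n)" "y \<in> carrier (TVB n)" "z \<in> carrier (TVB n)"
  then show "x \<otimes>\<^bsub>TVB n\<^esub> y \<otimes>\<^bsub>TVB n\<^esub> z = x \<otimes>\<^bsub>TVB n\<^esub> (y \<otimes>\<^bsub>TVB n\<^esub> z)"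
    unfolding TVB_carrier using TVB_mult by auto
next
  fix x assume "x \<in> carrier (TVB n)"
  then show "\<one>\<^bsub>TVB n\<^esub> \<otimes>\<^bsub>TVB n\<^esub> x = x"
    unfolding TVB_carrier TVB_one using TVB_mult by auto
next
  fix x assume "x \<in> carrier (TVB n)"
  then obtain u where u: "u \<in> words n" "x = cls n u" unfolding TVB_carrier by auto
  then show "\<exists>y\<in>carrier (TVB n). y \<otimes>\<^bsub>TVB n\<^esub> x = \<one>\<^bsub>TVB n\<^esub>"
    using cls_inv_word_append[OF u(1)] TVB_mult[of "inv_word u" n u] unfolding TVB_carrier TVB_one
    by (intro bexI[of _ "cls n (inv_word u)"]) auto
qed

lemma cls_carrier: "u \<in> words n \<Longrightarrow> cls n u \<in> carrier (TVB n)"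
  unfolding TVB_carrier by auto

lemma TVB_inv: "u \<in> words n \<Longrightarrow> inv\<^bsub>TVB n\<^esub> (cls n u) = cls n (inv_word u)"
proof -
  assume u: "u \<in> words n"
  interpret G: group "TVB n" by (rule group_TVB)
  show ?thesis
    by (rule G.inv_equality) (use u cls_inv_word_append TVB_mult cls_carrier TVB_one in auto)
qed

lemma inv_word_inv_word[simp]: "inv_word (inv_word u) = u"
  by (simp add: inv_word_def rev_map[symmetric] inv_letter_def comp_def)

lemma cls_append_inv_word: "u \<in> words n \<Longrightarrow> cls n (u @ inv_word u) = cls n []"
  using cls_inv_word_append[of "inv_word u" n] by simp

lemma inv_word_Cons: "inv_word (x#u) = inv_word u @ [inv_letter x]" by (simp add: inv_word_def)

section \<open>The action on signed indices\<close>

fun gen_action :: "gen \<Rightarrow> nat \<times> bool \<Rightarrow> nat \<times> bool" where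
  "gen_action (Sg i) = id"
| "gen_action (Rg i) = (\<lambda>(j,b). (Transposition.transpose i (i+1) j, b))"
| "gen_action (Gg k) = (\<lambda>(j,b). if j = k then (j, \<not> b) else (j, b))"

definition signed_perm :: "word \<Rightarrow> nat \<times> bool \<Rightarrow> nat \<times> bool" where
  "signed_perm w = foldr (\<lambda>x f. gen_action (fst x) \<circ> f) w id"

lemma signed_perm_Nil[simp]: "signed_perm [] = id" by (simp add: signed_perm_def)

lemma signed_perm_Cons[simp]: "signed_perm (x#w) = gen_action (fst x) \<circ> signed_perm w" by (simp add: signed_perm_def)

lemma signed_perm_append[simp]: "signed_perm (u@v) = signed_perm u \<circ> signed_perm v"
  by (induction u) auto

lemma gen_action_involution: "gen_action g \<circ> gen_action g = id"
  by (cases g) (auto simp: transpose_def fun_eq_iff)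

lemma transpose_braid: "transpose i (Suc i) (transpose (Suc i) (Suc (Suc i)) (transpose i (Suc i) j)) = transpose (Suc i) (Suc (Suc i)) (transpose i (Suc i) (transpose (Suc i) (Suc (Suc i)) j))"
  by (simp add: transpose_def)

lemma transpose_eq_other: "j \<noteq> i \<Longrightarrow> j \<noteq> Suc i \<Longrightarrow> (transpose i (Suc i) k = j) = (k = j)"
  by (auto simp add: transpose_def)

lemma gen_action_gen_action: "gen_action g (gen_action g x) = x"
  using gen_action_involution[of g] by (metis comp_apply id_apply)

lemma signed_perm_rel: "(l,r) \<in> tvb_rels n \<Longrightarrow> signed_perm l = signed_perm r"
  unfolding tvb_rels_def
  apply (elim UnE)
  subgoal by (clarsimp simp: inv_letter_def fun_eq_iff gen_action_gen_action)
  subgoal by (clarsimp simp: fun_eq_iff)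
  subgoal by (clarsimp simp: fun_eq_iff)
  subgoal by (clarsimp simp: fun_eq_iff gen_action_gen_action)
  subgoal by (clarsimp simp: fun_eq_iff) (auto simp: transpose_def)
  subgoal by (clarsimp simp: fun_eq_iff transpose_braid)
  subgoal by (clarsimp simp: fun_eq_iff)
  subgoal by (clarsimp simp: fun_eq_iff)
  subgoal by (clarsimp simp: fun_eq_iff gen_action_gen_action)
  subgoal by (clarsimp simp: fun_eq_iff)
  subgoal by (clarsimp simp: fun_eq_iff transpose_eq_other)
  subgoal by (clarsimp simp: fun_eq_iff)
  subgoal by (clarsimp simp: fun_eq_iff transpose_def)
  subgoal by (clarsimp simp: fun_eq_iff transpose_def)
  done

lemma signed_perm_tvb_eq: "(u,v) \<in> tvb_eq n \<Longrightarrow> signed_perm u = signed_perm v"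
  by (induction rule: tvb_eq.induct) (auto dest: signed_perm_rel)

lemma signed_perm_cls: "u \<in> words n \<Longrightarrow> cls n u = cls n v \<Longrightarrow> signed_perm u = signed_perm v"
  using cls_eq_iff signed_perm_tvb_eq by blast

lemma word_perm_Nil[simp]: "word_perm [] = id" by (simp add: word_perm_def)

lemma word_perm_Cons: "word_perm (x#w) = (case fst x of Rg i \<Rightarrow> Transposition.transpose i (i+1) \<circ> word_perm w | _ \<Rightarrow> word_perm w)"
  unfolding word_perm_def by simp

lemma fst_signed_perm: "fst (signed_perm w (j,b)) = word_perm w j"
proof (induction w arbitrary: j b)
  case Nil then show ?case by simp
next
  case (Cons x w)
  obtain j' b' where jb: "signed_perm w (j,b) = (j',b')" by fastforce
  then have "j' = word_perm w j" using Cons[of j b] by simp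
  then show ?case using jb by (cases "fst x") (auto simp: word_perm_Cons)
qed

lemma snd_signed_perm: "snd (signed_perm w (j,b)) = (b \<noteq> snd (signed_perm w (j,False)))"
proof (induction w arbitrary: j b)
  case Nil then show ?case by simp
next
  case (Cons x w)
  obtain j' b' where jb: "signed_perm w (j,b) = (j',b')" by fastforce
  obtain j'' b'' where jb2: "signed_perm w (j,False) = (j'',b'')" by fastforce
  have "j' = j''" using fst_signed_perm[of w j b] fst_signed_perm[of w j False] jb jb2 by simp
  moreover have "b' = (b \<noteq> b'')" using Cons[of j b] jb jb2 by simp
  ultimately show ?case using jb jb2 by (cases "fst x") auto
qed

definition sign_flips :: "word \<Rightarrow> nat \<Rightarrow> bool" where
  "sign_flips w j = snd (signed_perm w (j, False))"

lemma signed_perm_eq: "signed_perm w (j,b) = (word_perm w j, b \<noteq> sign_flips w j)"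
  using fst_signed_perm[of w j b] snd_signed_perm[of w j b] unfolding sign_flips_def by (simp add: prod_eq_iff)

lemma word_perm_cls: "u \<in> words n \<Longrightarrow> cls n u = cls n v \<Longrightarrow> word_perm u = word_perm v"
proof -
  assume "u \<in> words n" "cls n u = cls n v"
  then have "signed_perm u = signed_perm v" by (rule signed_perm_cls)
  then show ?thesis using fst_signed_perm[of u _ False] fst_signed_perm[of v _ False] by (auto simp: fun_eq_iff)
qed

lemma sign_flips_cls: "u \<in> words n \<Longrightarrow> cls n u = cls n v \<Longrightarrow> sign_flips u = sign_flips v"
  using signed_perm_cls[of u n v] unfolding sign_flips_def by auto

lemma word_perm_append[simp]: "word_perm (u@v) = word_perm u \<circ> word_perm v"
  by (induction u) (auto simp: word_perm_Cons split: gen.split)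

lemma some_in_cls:
  "u \<in> words n
    \<Longrightarrow> (SOME w. w \<in> cls n u) \<in> words n \<and> cls n (SOME w. w \<in> cls n u) = cls n u"
proof -
  assume u: "u \<in> words n"
  then have "(SOME w. w \<in> cls n u) \<in> cls n u" using cls_self by (metis someI)
  then have "(u, SOME w. w \<in> cls n u) \<in> tvb_eq n" using cls_mem by blast
  then show ?thesis using u tvb_eq_words cls_eq_iff by metis
qed

lemma phiH_cls: "u \<in> words n \<Longrightarrow> phiH (cls n u) = word_perm u"
  unfolding phiH_def using some_in_cls word_perm_cls by metis

lemma TVH_set_eq: "TVH_set n = {cls n w | w. w \<in> words n \<and> word_perm w = id}"
proof -
  have "TVH_set n = {x. x \<in> cls n ` words n \<and> phiH x = id}"
    unfolding TVH_set_def kernel_def TVB_carrier by (simp add: sym_group_def)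
  also have "\<dots> = {cls n w | w. w \<in> words n \<and> word_perm w = id}"
    by (auto simp: phiH_cls)
  finally show ?thesis .
qed

lemma word_perm_inv_word: "u \<in> words n \<Longrightarrow> word_perm u = id \<Longrightarrow> word_perm (inv_word u) = id"
proof -
  assume u: "u \<in> words n" "word_perm u = id"
  have "word_perm (inv_word u @ u) = word_perm []"
    by (rule word_perm_cls[of _ n]) (use u cls_inv_word_append in auto)
  then show ?thesis using u by simp
qed

lemma TVH_memI: "w \<in> words n \<Longrightarrow> word_perm w = id \<Longrightarrow> cls n w \<in> TVH_set n"
  unfolding TVH_set_eq by blast

lemma TVH_memE: "a \<in> TVH_set n \<Longrightarrow> (\<And>w. w \<in> words n \<Longrightarrow> word_perm w = id \<Longrightarrow> a = cls n w \<Longrightarrow> P) \<Longrightarrow> P"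
  unfolding TVH_set_eq by blast

lemma TVH_subgroup: "subgroup (TVH_set n) (TVB n)"
proof -
  interpret G: group "TVB n" by (rule group_TVB)
  show ?thesis
  proof (rule G.subgroupI)
    show "TVH_set n \<subseteq> carrier (TVB n)" unfolding TVB_carrier by (auto elim: TVH_memE)
    show "TVH_set n \<noteq> {}" using TVH_memI[of "[]" n] by auto
  next
    fix a assume "a \<in> TVH_set n"
    then obtain w where w: "w \<in> words n" "word_perm w = id" "a = cls n w" by (rule TVH_memE)
    then have "inv\<^bsub>TVB n\<^esub> a = cls n (inv_word w)" using TVB_inv by simp
    then show "inv\<^bsub>TVB n\<^esub> a \<in> TVH_set n"
      using TVH_memI[of "inv_word w" n] word_perm_inv_word[OF w(1,2)] w(1) by simp
  next
    fix a b assume "a \<in> TVH_set n" "b \<in> TVH_set n"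
    then obtain v w where w: "w \<in> words n" "word_perm w = id" "a = cls n w"
      and v: "v \<in> words n" "word_perm v = id" "b = cls n v" by (metis TVH_memE)
    then have "a \<otimes>\<^bsub>TVB n\<^esub> b = cls n (w@v)" using TVB_mult by simp
    then show "a \<otimes>\<^bsub>TVB n\<^esub> b \<in> TVH_set n"
      using TVH_memI[of "w@v" n] w v by simp
  qed
qed

lemma group_TVH: "group (TVH n)"
  unfolding TVH_def using group.subgroup_imp_group[OF group_TVB TVH_subgroup] .

lemma signed_perm_outside: "w \<in> words n \<Longrightarrow> j = 0 \<or> n < j \<Longrightarrow> signed_perm w (j,b) = (j,b)"
proof (induction w arbitrary: b)
  case Nil then show ?case by simp
next
  case (Cons x w)
  obtain g c where x: "x = (g,c)" by fastforce
  have IH: "signed_perm w (j,b) = (j,b)" using Cons by auto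
  have v: "valid_gen n g" using Cons.prems x by auto
  show ?case using IH v Cons.prems(2) x by (cases g) (auto simp: transpose_def)
qed

lemma signed_perm_id_iff:
  "w \<in> words n
    \<Longrightarrow> signed_perm w = id \<longleftrightarrow> word_perm w = id \<and> (\<forall>j. 1 \<le> j \<and> j \<le> n \<longrightarrow> \<not> sign_flips w j)"
proof
  assume "signed_perm w = id"
  then show "word_perm w = id \<and> (\<forall>j. 1 \<le> j \<and> j \<le> n \<longrightarrow> \<not> sign_flips w j)"
    using fst_signed_perm[of w _ False] unfolding sign_flips_def by (auto simp: fun_eq_iff)
next
  assume w: "w \<in> words n" and a: "word_perm w = id \<and> (\<forall>j. 1 \<le> j \<and> j \<le> n \<longrightarrow> \<not> sign_flips w j)"
  show "signed_perm w = id"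
  proof (rule ext)
    fix p :: "nat \<times> bool"
    obtain j b where p: "p = (j,b)" by fastforce
    show "signed_perm w p = id p"
    proof (cases "1 \<le> j \<and> j \<le> n")
      case True then show ?thesis using a p signed_perm_eq[of w j b] by simp
    next
      case False then show ?thesis using signed_perm_outside[OF w, of j b] p by auto
    qed
  qed
qed

lemma rho_rho: "1 \<le> i \<Longrightarrow> i < n \<Longrightarrow> cls n (rw i @ rw i) = cls n []"
  by (rule cls_rel, unfold tvb_rels_def, (simp; linarith))

lemma gamma_gamma: "1 \<le> j \<Longrightarrow> j \<le> n \<Longrightarrow> cls n (gw j @ gw j) = cls n []"
  by (rule cls_rel, unfold tvb_rels_def, (simp; linarith))

lemma rho_far_commute:
  "1 \<le> i \<Longrightarrow> i < n \<Longrightarrow> 1 \<le> j \<Longrightarrow> j < n \<Longrightarrow> i + 2 \<le> j \<or> j + 2 \<le> i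
    \<Longrightarrow> cls n (rw i @ rw j) = cls n (rw j @ rw i)"
  by (rule cls_rel, unfold tvb_rels_def, (simp; linarith))

lemma rho_braid:
  "1 \<le> i \<Longrightarrow> Suc i < n
    \<Longrightarrow> cls n (rw i @ rw (Suc i) @ rw i) = cls n (rw (Suc i) @ rw i @ rw (Suc i))"
  by (rule cls_rel, unfold tvb_rels_def, (simp; linarith))

lemma sigma_rho_far_commute:
  "1 \<le> i \<Longrightarrow> i < n \<Longrightarrow> 1 \<le> j \<Longrightarrow> j < n \<Longrightarrow> i + 2 \<le> j \<or> j + 2 \<le> i
    \<Longrightarrow> cls n (sw i @ rw j) = cls n (rw j @ sw i)"
  by (rule cls_rel, unfold tvb_rels_def, (simp; linarith))

lemma rho_rho_sigma:
  "1 \<le> i \<Longrightarrow> Suc i < n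
    \<Longrightarrow> cls n (rw i @ rw (Suc i) @ sw i) = cls n (sw (Suc i) @ rw i @ rw (Suc i))"
  by (rule cls_rel, unfold tvb_rels_def, (simp; linarith))

lemma gamma_commute: "1 \<le> i \<Longrightarrow> i \<le> n \<Longrightarrow> 1 \<le> j \<Longrightarrow> j \<le> n \<Longrightarrow> cls n (gw i @ gw j) = cls n (gw j @ gw i)"
  by (rule cls_rel, unfold tvb_rels_def, (simp; linarith))

lemma gamma_rho_commute:
  "1 \<le> i \<Longrightarrow> i < n \<Longrightarrow> 1 \<le> j \<Longrightarrow> j \<le> n \<Longrightarrow> j \<noteq> i \<Longrightarrow> j \<noteq> Suc i
    \<Longrightarrow> cls n (gw j @ rw i) = cls n (rw i @ gw j)"
  by (rule cls_rel, unfold tvb_rels_def, (simp; linarith))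

lemma gamma_sigma_commute:
  "1 \<le> i \<Longrightarrow> i < n \<Longrightarrow> 1 \<le> j \<Longrightarrow> j \<le> n \<Longrightarrow> j \<noteq> i \<Longrightarrow> j \<noteq> Suc i
    \<Longrightarrow> cls n (gw j @ sw i) = cls n (sw i @ gw j)"
  by (rule cls_rel, unfold tvb_rels_def, (simp; linarith))

lemma rho_gamma_rel: "1 \<le> i \<Longrightarrow> i < n \<Longrightarrow> cls n (rw i @ gw i) = cls n (gw (Suc i) @ rw i)"
  by (rule cls_rel, unfold tvb_rels_def, (simp; linarith))

lemma rho_sigma_rho:
  "1 \<le> i \<Longrightarrow> i < n
    \<Longrightarrow> cls n (rw i @ sw i @ rw i) = cls n (gw (Suc i) @ gw i @ sw i @ gw i @ gw (Suc i))"
  by (rule cls_rel, unfold tvb_rels_def, (simp; linarith))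

lemma cancel_letter: "valid_gen n g \<Longrightarrow> cls n [(g,b), (g, \<not> b)] = cls n []"
  by (rule cls_rel, unfold tvb_rels_def, simp add: inv_letter_def)

lemma neg_letter_eq:
  assumes "valid_gen n g" "cls n [(g,True),(g,True)] = cls n []"
  shows "cls n [(g,False)] = cls n [(g,True)]"
proof -
  have "cls n [(g,False)] = cls n ([(g,False)] @ [(g,True),(g,True)])"
    using cls_append_left[OF assms(2), of "[(g,False)]"] assms(1) by simp
  also have "\<dots> = cls n ([(g,False),(g,True)] @ [(g,True)])" by simp
  also have "\<dots> = cls n ([] @ [(g,True)])"
    using cls_append_right[OF cancel_letter[OF assms(1), of False], of "[(g,True)]"] assms(1) by simp
  finally show ?thesis by simp
qed

lemma rho_neg: "1 \<le> i \<Longrightarrow> i < n \<Longrightarrow> cls n [(Rg i,False)] = cls n (rw i)"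
  using neg_letter_eq[of n "Rg i"] rho_rho[of i n] by simp

lemma gamma_neg: "1 \<le> i \<Longrightarrow> i \<le> n \<Longrightarrow> cls n [(Gg i,False)] = cls n (gw i)"
  using neg_letter_eq[of n "Gg i"] gamma_gamma[of i n] by simp

lemma rho_gamma_succ: "1 \<le> i \<Longrightarrow> i < n \<Longrightarrow> cls n (rw i @ gw (Suc i)) = cls n (gw i @ rw i)"
proof -
  assume i: "1 \<le> i" "i < n"
  have "cls n (rw i @ gw (Suc i)) = cls n (rw i @ gw (Suc i) @ (rw i @ rw i))"
    using cls_append_left[OF rho_rho[OF i, symmetric], of "rw i @ gw (Suc i)"] i by simp
  also have "\<dots> = cls n (rw i @ (gw (Suc i) @ rw i) @ rw i)" by simp
  also have "\<dots> = cls n (rw i @ (rw i @ gw i) @ rw i)"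
    using cls_context[OF rho_gamma_rel[OF i, symmetric], of "rw i" "rw i"] i by simp
  also have "\<dots> = cls n ((rw i @ rw i) @ gw i @ rw i)" by simp
  also have "\<dots> = cls n ([] @ gw i @ rw i)"
    using cls_append_right[OF rho_rho[OF i], of "gw i @ rw i"] i by simp
  finally show ?thesis by simp
qed

lemma rho_gamma_swap:
  assumes "1 \<le> m" "m < n" "1 \<le> j" "j \<le> n"
  shows "cls n (rw m @ gw j) = cls n (gw (Transposition.transpose m (Suc m) j) @ rw m)"
proof -
  consider "j = m" | "j = Suc m" | "j \<noteq> m" "j \<noteq> Suc m" by blast
  then show ?thesis
  proof cases
    case 1 then show ?thesis using rho_gamma_rel[of m n] assms by simp
  next
    case 2 then show ?thesis using rho_gamma_succ[of m n] assms by simp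
  next
    case 3 then show ?thesis using gamma_rho_commute[of m n j] assms by (simp add: transpose_def)
  qed
qed

section \<open>Words in the \<open>\<rho>\<^sub>i\<close> and the Coxeter presentation of \<open>S\<^sub>n\<close>\<close>

definition rho_word :: "nat list \<Rightarrow> word" where "rho_word p = map (\<lambda>i. (Rg i, True)) p"

definition rho_perm :: "nat list \<Rightarrow> nat \<Rightarrow> nat" where "rho_perm p = foldr (\<lambda>i f. Transposition.transpose i (Suc i) \<circ> f) p id"

definition rho_idx :: "nat \<Rightarrow> nat list \<Rightarrow> bool" where "rho_idx n p = (\<forall>i\<in>set p. 1 \<le> i \<and> i < n)"

lemma rho_word_Nil[simp]: "rho_word [] = []" by (simp add: rho_word_def)

lemma rho_word_Cons[simp]: "rho_word (i#p) = rw i @ rho_word p" by (simp add: rho_word_def)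

lemma rho_word_append[simp]: "rho_word (p@q) = rho_word p @ rho_word q" by (simp add: rho_word_def)

lemma rho_word_words[simp]: "rho_word p \<in> words n \<longleftrightarrow> rho_idx n p" by (auto simp: rho_word_def rho_idx_def words_def)

lemma rho_idx_simps[simp]: "rho_idx n [] " "rho_idx n (i#p) \<longleftrightarrow> 1 \<le> i \<and> i < n \<and> rho_idx n p" "rho_idx n (p@q) \<longleftrightarrow> rho_idx n p \<and> rho_idx n q"
  by (auto simp: rho_idx_def)

lemma rho_perm_Nil[simp]: "rho_perm [] = id" by (simp add: rho_perm_def)

lemma rho_perm_Cons[simp]: "rho_perm (i#p) = Transposition.transpose i (Suc i) \<circ> rho_perm p" by (simp add: rho_perm_def)

lemma rho_perm_append[simp]: "rho_perm (p@q) = rho_perm p \<circ> rho_perm q" by (induction p) auto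

lemma word_perm_rho_word[simp]: "word_perm (rho_word p) = rho_perm p"
  by (induction p) (auto simp: word_perm_Cons)

lemma rho_idx_upt[simp]: "rho_idx n [a..<b] \<longleftrightarrow> (a < b \<longrightarrow> 1 \<le> a \<and> b \<le> n)"
proof
  assume v: "rho_idx n [a..<b]"
  show "a < b \<longrightarrow> 1 \<le> a \<and> b \<le> n"
  proof
    assume ab: "a < b"
    have "b - 1 \<in> set [a..<b]" "a \<in> set [a..<b]" using ab by auto
    then show "1 \<le> a \<and> b \<le> n" using v unfolding rho_idx_def by fastforce
  qed
qed (auto simp: rho_idx_def)

lemma rho_idx_rev[simp]: "rho_idx n (rev p) \<longleftrightarrow> rho_idx n p" by (auto simp: rho_idx_def)

lemma rup_eq_rho_word: "rup a b = rho_word [a..<b]" by (simp add: rup_def rho_word_def)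

lemma rev_rho_word: "rev (rho_word p) = rho_word (rev p)" by (simp add: rho_word_def rev_map)

lemma rho_word_commute:
  assumes "\<forall>i\<in>set q. j+2 \<le> i \<or> i+2 \<le> j" "rho_idx n q" "1 \<le> j" "j < n"
  shows "cls n (rho_word q @ rw j) = cls n (rw j @ rho_word q)"
  using assms
proof (induction q)
  case Nil then show ?case by simp
next
  case (Cons i q)
  have "cls n (rho_word (i#q) @ rw j) = cls n (rw i @ (rho_word q @ rw j))" by simp
  also have "\<dots> = cls n (rw i @ (rw j @ rho_word q))"
    using Cons by (intro cls_append_left) auto
  also have "\<dots> = cls n ((rw i @ rw j) @ rho_word q)" by simp
  also have "\<dots> = cls n ((rw j @ rw i) @ rho_word q)"
    using Cons by (intro cls_append_right rho_far_commute) auto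
  finally show ?case by simp
qed

lemma upt_split3: "a \<le> m \<Longrightarrow> Suc (Suc m) \<le> b \<Longrightarrow> [a..<b] = [a..<m] @ m # Suc m # [Suc (Suc m)..<b]"
proof -
  assume a: "a \<le> m" "Suc (Suc m) \<le> b"
  have "[a..<b] = [a..<m] @ [m..<b]" using a upt_add_eq_append[of a m "b - m"] by simp
  also have "[m..<b] = m # Suc m # [Suc (Suc m)..<b]" using a by (simp add: upt_conv_Cons)
  finally show ?thesis .
qed

definition rho_chain :: "nat \<Rightarrow> nat \<Rightarrow> nat list" where "rho_chain m k = rev [k..<Suc m]"

lemma rho_perm_rho_chain: "k \<le> Suc m \<Longrightarrow> rho_perm (rho_chain m k) k = Suc m"
proof (induction m)
  case 0 then show ?case by (cases k) (auto simp: rho_chain_def transpose_def)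
next
  case (Suc m)
  show ?case
  proof (cases "k = Suc (Suc m)")
    case True then show ?thesis by (simp add: rho_chain_def)
  next
    case False
    then have "rho_chain (Suc m) k = Suc m # rho_chain m k" using Suc.prems by (simp add: rho_chain_def)
    then show ?thesis using Suc False by (simp add: transpose_def)
  qed
qed

lemma rho_perm_fixed: "\<forall>i\<in>set p. x \<noteq> i \<and> x \<noteq> Suc i \<Longrightarrow> rho_perm p x = x"
  by (induction p) (auto simp: transpose_def)

lemma rho_chain_commute:
  assumes "1 \<le> j" "j + 1 < k" "k \<le> Suc m" "m < n"
  shows "cls n (rho_word (rho_chain m k) @ rw j) = cls n (rw j @ rho_word (rho_chain m k))"
  using assms by (intro rho_word_commute) (auto simp: rho_idx_def rho_chain_def)

lemma rho_chain_braid: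
  assumes "1 \<le> k" "k \<le> i" "Suc i \<le> m" "m < n"
  shows "cls n (rho_word (rho_chain m k) @ rw (Suc i)) = cls n (rw i @ rho_word (rho_chain m k))"
proof -
  define A where "A = rho_word (rho_chain m (Suc (Suc i)))"
  define B where "B = rho_word (rev [k..<i])"
  have chain: "rho_word (rho_chain m k) = A @ rw (Suc i) @ rw i @ B"
    using upt_split3[of k i "Suc m"] assms unfolding A_def B_def rho_chain_def by simp
  have words: "A \<in> words n" "B \<in> words n"
    using assms unfolding A_def B_def rho_chain_def by auto
  have "cls n (rho_word (rho_chain m k) @ rw (Suc i)) = cls n ((A @ rw (Suc i) @ rw i) @ B @ rw (Suc i))"
    using chain by simp
  also have "\<dots> = cls n ((A @ rw (Suc i) @ rw i) @ rw (Suc i) @ B)"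
    using assms words unfolding B_def by (intro cls_append_left rho_word_commute) auto
  also have "\<dots> = cls n (A @ (rw (Suc i) @ rw i @ rw (Suc i)) @ B)"
    by simp
  also have "\<dots> = cls n (A @ (rw i @ rw (Suc i) @ rw i) @ B)"
    using assms words rho_braid[of i n] by (intro cls_context) auto
  also have "\<dots> = cls n ((A @ rw i) @ rw (Suc i) @ rw i @ B)"
    by simp
  also have "\<dots> = cls n ((rw i @ A) @ rw (Suc i) @ rw i @ B)"
    using assms words unfolding A_def
    by (intro cls_append_right rho_word_commute) (auto simp: rho_idx_def rho_chain_def)
  finally show ?thesis
    using chain by simp
qed

lemma rho_chain_snoc:
  assumes "1 \<le> k" "k \<le> Suc m" "1 \<le> j" "j \<le> m" "m < n"
  shows "\<exists>q k'. rho_idx n q \<and> (\<forall>i\<in>set q. i < m) \<and> 1 \<le> k' \<and> k' \<le> Suc m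
    \<and> cls n (rho_word (rho_chain m k) @ rw j) = cls n (rho_word (q @ rho_chain m k'))"
proof -
  consider "j + 1 < k" | "j + 1 = k" | "j = k" | "k < j"
    by linarith
  then show ?thesis
  proof cases
    case 1
    then have "cls n (rho_word (rho_chain m k) @ rw j) = cls n (rho_word ([j] @ rho_chain m k))"
      using rho_chain_commute[of j k m n] assms by simp
    then show ?thesis
      using 1 assms by (intro exI[of _ "[j]"] exI[of _ k] conjI) auto
  next
    case 2
    then have chain: "rho_chain m k @ [j] = rho_chain m j"
      using assms unfolding rho_chain_def by (simp add: upt_conv_Cons)
    have "rho_word (rho_chain m k) @ rw j = rho_word ([] @ rho_chain m j)"
      using arg_cong[OF chain, of rho_word] by simp
    then show ?thesis
      using 2 assms by (intro exI[of _ "[]"] exI[of _ j] conjI) auto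
  next
    case 3
    then have "rho_word (rho_chain m k) @ rw j = rho_word (rho_chain m (Suc k)) @ (rw k @ rw k) @ []"
      using assms unfolding rho_chain_def by (simp add: upt_conv_Cons)
    also have "cls n \<dots> = cls n (rho_word (rho_chain m (Suc k)) @ [] @ [])"
      using 3 assms by (intro cls_context rho_rho) (auto simp: rho_idx_def rho_chain_def)
    finally show ?thesis
      using 3 assms by (intro exI[of _ "[]"] exI[of _ "Suc k"] conjI) auto
  next
    case 4
    define i where "i = j - 1"
    have i: "j = Suc i" "k \<le> i"
      using 4 assms unfolding i_def by auto
    then have "cls n (rho_word (rho_chain m k) @ rw j) = cls n (rho_word ([i] @ rho_chain m k))"
      using rho_chain_braid[of k i m n] assms by simp
    then show ?thesis
      using i assms by (intro exI[of _ "[i]"] exI[of _ k] conjI) auto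
  qed
qed

lemma rho_word_decomp:
  assumes "rho_idx n p" "\<forall>i\<in>set p. i \<le> m" "m < n"
  shows "\<exists>p' k. rho_idx n p' \<and> (\<forall>i\<in>set p'. i < m) \<and> 1 \<le> k \<and> k \<le> Suc m
    \<and> cls n (rho_word p) = cls n (rho_word (p' @ rho_chain m k))"
  using assms
proof (induction p rule: rev_induct)
  case Nil
  show ?case by (intro exI[of _ "[]"] exI[of _ "Suc m"]) (simp add: rho_chain_def)
next
  case (snoc j p)
  then obtain p' k where IH: "rho_idx n p'" "\<forall>i\<in>set p'. i < m" "1 \<le> k" "k \<le> Suc m"
    "cls n (rho_word p) = cls n (rho_word (p' @ rho_chain m k))" by auto
  obtain q k' where q: "rho_idx n q" "\<forall>i\<in>set q. i < m" "1 \<le> k'" "k' \<le> Suc m"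
    "cls n (rho_word (rho_chain m k) @ rw j) = cls n (rho_word (q @ rho_chain m k'))"
    using rho_chain_snoc[of k m j n] IH snoc.prems by auto
  have "cls n (rho_word (p @ [j])) = cls n (rho_word p' @ (rho_word (rho_chain m k) @ rw j))"
    using cls_append_right[OF IH(5)] snoc.prems by simp
  also have "\<dots> = cls n (rho_word ((p' @ q) @ rho_chain m k'))"
    using cls_append_left[OF q(5)] IH(1) by simp
  finally show ?case
    using IH q by (intro exI[of _ "p' @ q"] exI[of _ k']) auto
qed

lemma rho_word_trivial_aux:
  "m < n \<Longrightarrow> rho_idx n p \<Longrightarrow> \<forall>i\<in>set p. i \<le> m \<Longrightarrow> rho_perm p = id \<Longrightarrow> cls n (rho_word p) = cls n []"
proof (induction m arbitrary: p)
  case 0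
  then have "p = []" by (cases p) (auto)
  then show ?case by simp
next
  case (Suc m)
  obtain p' k where d: "rho_idx n p'" "\<forall>i\<in>set p'. i < Suc m" "1 \<le> k" "k \<le> Suc (Suc m)"
    "cls n (rho_word p) = cls n (rho_word (p' @ rho_chain (Suc m) k))"
    using rho_word_decomp[OF Suc.prems(2,3,1)] by blast
  have "rho_perm p = rho_perm (p' @ rho_chain (Suc m) k)"
    using word_perm_cls[OF _ d(5)] Suc.prems by simp
  then have "rho_perm p' (rho_perm (rho_chain (Suc m) k) k) = k" using Suc.prems by (metis comp_apply id_apply rho_perm_append)
  then have "rho_perm p' (Suc (Suc m)) = k" using rho_perm_rho_chain[OF d(4)] by simp
  moreover have "rho_perm p' (Suc (Suc m)) = Suc (Suc m)" using d(2) by (intro rho_perm_fixed) auto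
  ultimately have k: "k = Suc (Suc m)" by simp
  then have "rho_chain (Suc m) k = []" by (simp add: rho_chain_def)
  then have "cls n (rho_word p) = cls n (rho_word p')" "rho_perm p' = id" using d(5) \<open>rho_perm p = rho_perm (p' @ rho_chain (Suc m) k)\<close> Suc.prems
    by (auto simp: id_def)
  moreover have "cls n (rho_word p') = cls n []" by (rule Suc.IH) (use Suc.prems d \<open>rho_perm p' = id\<close> in auto)
  ultimately show ?case by simp
qed

lemma rho_word_trivial: "rho_idx n p \<Longrightarrow> rho_perm p = id \<Longrightarrow> cls n (rho_word p) = cls n []"
proof (cases n)
  case 0
  assume "rho_idx n p" then have "p = []" using 0 by (cases p) auto
  then show ?thesis by simp
next
  case (Suc n')
  assume "rho_idx n p" "rho_perm p = id"
  then show ?thesis by (intro rho_word_trivial_aux[of "n - 1" n p]) (use Suc in \<open>auto simp: rho_idx_def\<close>)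
qed

lemma rho_perm_range: "rho_idx n p \<Longrightarrow> 1 \<le> j \<Longrightarrow> j \<le> n \<Longrightarrow> 1 \<le> rho_perm p j \<and> rho_perm p j \<le> n"
  by (induction p arbitrary: j) (auto simp: transpose_def)

lemma rho_word_gamma:
  "rho_idx n p \<Longrightarrow> 1 \<le> j \<Longrightarrow> j \<le> n
    \<Longrightarrow> cls n (rho_word p @ gw j) = cls n (gw (rho_perm p j) @ rho_word p)"
proof (induction p arbitrary: j)
  case Nil then show ?case by simp
next
  case (Cons i p)
  have r: "1 \<le> rho_perm p j \<and> rho_perm p j \<le> n" using rho_perm_range Cons.prems by auto
  have "cls n (rho_word (i#p) @ gw j) = cls n (rw i @ (rho_word p @ gw j))" by simp
  also have "\<dots> = cls n (rw i @ (gw (rho_perm p j) @ rho_word p))"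
    using Cons by (intro cls_append_left) auto
  also have "\<dots> = cls n ((rw i @ gw (rho_perm p j)) @ rho_word p)" by simp
  also have "\<dots> = cls n ((gw (rho_perm (i#p) j) @ rw i) @ rho_word p)"
  proof -
    have rg: "cls n (rw i @ gw (rho_perm p j)) = cls n (gw (rho_perm (i#p) j) @ rw i)"
      using rho_gamma_swap[of i n "rho_perm p j"] Cons.prems r by simp
    show ?thesis by (rule cls_append_right[OF rg])
  qed
  finally show ?case by simp
qed

lemma rho_perm_rev_upt_start: "a \<le> b \<Longrightarrow> rho_perm (rev [a..<b]) a = b"
proof (induction b)
  case 0 then show ?case by simp
next
  case (Suc b)
  show ?case
  proof (cases "a = Suc b")
    case True then show ?thesis by simp
  next
    case False
    then have "a \<le> b" using Suc.prems by simp
    then show ?thesis using Suc.IH by (simp add: transpose_def)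
  qed
qed

lemma rho_perm_upt_end: "a \<le> b \<Longrightarrow> rho_perm [a..<b] b = a"
proof (induction b)
  case 0 then show ?case by simp
next
  case (Suc b)
  show ?case
  proof (cases "a = Suc b")
    case True then show ?thesis by simp
  next
    case False
    then have "a \<le> b" using Suc.prems by simp
    then show ?thesis using Suc.IH by (simp add: transpose_def)
  qed
qed

lemma rho_perm_rev_upt_shift: "a \<le> m \<Longrightarrow> m < b \<Longrightarrow> rho_perm (rev [a..<b]) (Suc m) = m"
proof (induction b)
  case 0 then show ?case by simp
next
  case (Suc b)
  show ?case
  proof (cases "m = b")
    case True
    have "rho_perm (rev [a..<m]) (Suc m) = Suc m" by (rule rho_perm_fixed) auto
    then show ?thesis using True Suc.prems by (simp add: transpose_def)
  next
    case False
    then have "m < b" using Suc.prems by simp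
    then show ?thesis using Suc Suc.prems by (simp add: transpose_def)
  qed
qed

lemma rho_perm_upt_shift: "a \<le> m \<Longrightarrow> m < b \<Longrightarrow> rho_perm [a..<b] m = Suc m"
proof (induction b)
  case 0 then show ?case by simp
next
  case (Suc b)
  show ?case
  proof (cases "m = b")
    case True
    have "rho_perm [a..<m] (Suc m) = Suc m" by (rule rho_perm_fixed) auto
    then show ?thesis using True Suc.prems by (simp add: transpose_def)
  next
    case False
    then have "m < b" using Suc.prems by simp
    then show ?thesis using Suc Suc.prems by (simp add: transpose_def)
  qed
qed

lemma rho_perm_rev_inv: "rho_perm (rev p) \<circ> rho_perm p = id"
proof (induction p)
  case Nil then show ?case by simp
next
  case (Cons i p)
  have h: "\<forall>x. rho_perm (rev p) (rho_perm p x) = x" using Cons by (metis comp_apply id_apply)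
  show ?case by (simp add: fun_eq_iff h)
qed

lemma rho_word_commute': "\<forall>i\<in>set q. j+2 \<le> i \<or> i+2 \<le> j \<Longrightarrow> rho_idx n q \<Longrightarrow> 1 \<le> j \<Longrightarrow> j < n \<Longrightarrow>
   cls n (rw j @ rho_word q) = cls n (rho_word q @ rw j)"
  using rho_word_commute by metis

lemma rho_word_upt_shift:
  assumes "1 \<le> a" "a \<le> m" "Suc (Suc m) \<le> b" "b \<le> n"
  shows "cls n (rho_word [a..<b] @ rw m) = cls n (rw (Suc m) @ rho_word [a..<b])"
proof -
  define A where "A = rho_word [a..<m]"
  define B where "B = rho_word [Suc (Suc m)..<b]"
  have e: "rho_word [a..<b] = A @ rw m @ rw (Suc m) @ B" unfolding A_def B_def using upt_split3[OF assms(2,3)] by simp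
  have wA: "A \<in> words n" "B \<in> words n" unfolding A_def B_def using assms by auto
  have "cls n (rho_word [a..<b] @ rw m) = cls n ((A @ rw m @ rw (Suc m)) @ (B @ rw m))" using e by simp
  also have "\<dots> = cls n ((A @ rw m @ rw (Suc m)) @ (rw m @ B))"
    using assms wA(1) unfolding B_def by (intro cls_append_left rho_word_commute) auto
  also have "\<dots> = cls n (A @ (rw m @ rw (Suc m) @ rw m) @ B)" by simp
  also have "\<dots> = cls n (A @ (rw (Suc m) @ rw m @ rw (Suc m)) @ B)"
    using assms wA by (intro cls_context rho_braid) auto
  also have "\<dots> = cls n ((A @ rw (Suc m)) @ (rw m @ rw (Suc m) @ B))" by simp
  also have "\<dots> = cls n ((rw (Suc m) @ A) @ (rw m @ rw (Suc m) @ B))"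
    unfolding A_def using assms wA by (intro cls_append_right rho_word_commute) auto
  finally show ?thesis using e by simp
qed

lemma rho_word_rev_upt_shift:
  assumes "1 \<le> a" "a \<le> m" "Suc (Suc m) \<le> b" "b \<le> n"
  shows "cls n (rw m @ rho_word (rev [a..<b])) = cls n (rho_word (rev [a..<b]) @ rw (Suc m))"
proof -
  define A where "A = rho_word (rev [a..<m])"
  define B where "B = rho_word (rev [Suc (Suc m)..<b])"
  have e: "rho_word (rev [a..<b]) = B @ rw (Suc m) @ rw m @ A" unfolding A_def B_def using upt_split3[OF assms(2,3)] by simp
  have wA: "A \<in> words n" "B \<in> words n" unfolding A_def B_def using assms by auto
  have "cls n (rw m @ rho_word (rev [a..<b])) = cls n ((rw m @ B) @ (rw (Suc m) @ rw m @ A))" using e by simp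
  also have "\<dots> = cls n ((B @ rw m) @ (rw (Suc m) @ rw m @ A))"
  proof -
    have c: "cls n (rw m @ B) = cls n (B @ rw m)" unfolding B_def using assms by (intro rho_word_commute') auto
    show ?thesis by (rule cls_append_right[OF c])
  qed
  also have "\<dots> = cls n (B @ (rw m @ rw (Suc m) @ rw m) @ A)" by simp
  also have "\<dots> = cls n (B @ (rw (Suc m) @ rw m @ rw (Suc m)) @ A)"
    using assms wA by (intro cls_context rho_braid) auto
  also have "\<dots> = cls n ((B @ rw (Suc m) @ rw m) @ (rw (Suc m) @ A))" by simp
  also have "\<dots> = cls n ((B @ rw (Suc m) @ rw m) @ (A @ rw (Suc m)))"
  proof -
    have c: "cls n (rw (Suc m) @ A) = cls n (A @ rw (Suc m))" unfolding A_def using assms by (intro rho_word_commute') auto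
    show ?thesis by (rule cls_append_left[OF c])
  qed
  finally show ?thesis using e by simp
qed

definition gamma_word_on :: "(nat \<Rightarrow> bool) \<Rightarrow> nat list \<Rightarrow> word" where
  "gamma_word_on a L = concat (map (\<lambda>j. if a j then gw j else []) L)"

definition gamma_word :: "nat \<Rightarrow> (nat \<Rightarrow> bool) \<Rightarrow> word" where
  "gamma_word n a = gamma_word_on a [1..<Suc n]"

lemma gamma_word_on_Nil[simp]: "gamma_word_on a [] = []" by (simp add: gamma_word_on_def)

lemma gamma_word_on_snoc[simp]: "gamma_word_on a (L@[k]) = gamma_word_on a L @ (if a k then gw k else [])" by (simp add: gamma_word_on_def)

lemma gamma_word_on_Cons[simp]: "gamma_word_on a (k#L) = (if a k then gw k else []) @ gamma_word_on a L" by (simp add: gamma_word_on_def)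

lemma gamma_word_on_words: "\<forall>j\<in>set L. 1 \<le> j \<and> j \<le> n \<Longrightarrow> gamma_word_on a L \<in> words n"
  by (induction L) auto

lemma gamma_word_words[simp]: "gamma_word n a \<in> words n"
  unfolding gamma_word_def by (rule gamma_word_on_words) auto

lemma gamma_word_on_cong: "\<forall>j\<in>set L. a j = b j \<Longrightarrow> gamma_word_on a L = gamma_word_on b L"
  by (induction L) auto

lemma gamma_word_on_toggle:
  "distinct L \<Longrightarrow> \<forall>i\<in>set L. 1 \<le> i \<and> i \<le> n \<Longrightarrow> j \<in> set L \<Longrightarrow>
   cls n (gamma_word_on a L @ gw j) = cls n (gamma_word_on (a(j := \<not> a j)) L)"
proof (induction L rule: rev_induct)
  case Nil
  then show ?case by simp
next
  case (snoc k L)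
  let ?a' = "a(j := \<not> a j)"
  let ?g = "\<lambda>a. if a k then gw k else []"
  have w: "gamma_word_on a L \<in> words n" using snoc.prems by (intro gamma_word_on_words) auto
  have j: "1 \<le> j" "j \<le> n" using snoc.prems by auto
  show ?case
  proof (cases "k = j")
    case True
    have L: "gamma_word_on ?a' L = gamma_word_on a L"
      using True snoc.prems by (intro gamma_word_on_cong) auto
    have g: "cls n (?g a @ gw j) = cls n (?g ?a')"
      using True j gamma_gamma[of j n] by auto
    have "cls n (gamma_word_on a (L @ [k]) @ gw j) = cls n (gamma_word_on a L @ ?g a @ gw j)"
      by simp
    also have "\<dots> = cls n (gamma_word_on a L @ ?g ?a')"
      by (rule cls_append_left[OF g])
    also have "\<dots> = cls n (gamma_word_on ?a' (L @ [k]))"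
      using L by simp
    finally show ?thesis .
  next
    case False
    have commute: "cls n (?g a @ gw j) = cls n (gw j @ ?g a)"
      using snoc.prems j gamma_commute[of k n j] by auto
    have IH: "cls n (gamma_word_on a L @ gw j) = cls n (gamma_word_on ?a' L)"
      by (rule snoc.IH) (use snoc.prems False in auto)
    have "cls n (gamma_word_on a (L @ [k]) @ gw j) = cls n (gamma_word_on a L @ ?g a @ gw j)"
      by simp
    also have "\<dots> = cls n ((gamma_word_on a L @ gw j) @ ?g a)"
      using cls_append_left[OF commute] by simp
    also have "\<dots> = cls n (gamma_word_on ?a' L @ ?g a)"
      by (rule cls_append_right[OF IH])
    also have "\<dots> = cls n (gamma_word_on ?a' (L @ [k]))"
      by (simp only: gamma_word_on_snoc fun_upd_other[OF False])
    finally show ?thesis .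
  qed
qed

lemma gamma_word_toggle:
  "1 \<le> j \<Longrightarrow> j \<le> n
    \<Longrightarrow> cls n (gamma_word n a @ gw j) = cls n (gamma_word n (a(j := \<not> a j)))"
  unfolding gamma_word_def by (rule gamma_word_on_toggle) auto

lemma gamma_word_empty: "\<forall>j. 1 \<le> j \<and> j \<le> n \<longrightarrow> \<not> a j \<Longrightarrow> gamma_word n a = []"
  unfolding gamma_word_def gamma_word_on_def by auto

definition sigma_free :: "word \<Rightarrow> bool" where
  "sigma_free u = (\<forall>x\<in>set u. case fst x of Sg _ \<Rightarrow> False | _ \<Rightarrow> True)"

lemma sigma_free_normal_form:
  "sigma_free u \<Longrightarrow> u \<in> words n
    \<Longrightarrow> \<exists>a p. rho_idx n p \<and> cls n u = cls n (gamma_word n a @ rho_word p)"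
proof (induction u rule: rev_induct)
  case Nil
  show ?case by (intro exI[of _ "\<lambda>_. False"] exI[of _ "[]"]) (simp add: gamma_word_empty)
next
  case (snoc y u)
  then obtain a p where ap: "rho_idx n p" "cls n u = cls n (gamma_word n a @ rho_word p)" by (auto simp: sigma_free_def)
  obtain g s where y: "y = (g,s)" by fastforce
  have vg: "valid_gen n g" using snoc.prems y by auto
  have step: "cls n (u @ [y]) = cls n (gamma_word n a @ rho_word p @ [y])"
    using cls_append_right[OF ap(2), of "[y]"] snoc.prems by simp
  show ?case
  proof (cases g)
    case (Sg i) then show ?thesis using snoc.prems y by (auto simp: sigma_free_def)
  next
    case (Rg i)
    then have i: "1 \<le> i" "i < n" using vg by auto
    have "cls n [y] = cls n (rw i)" using y Rg i by (cases s) (auto simp: rho_neg)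
    then have "cls n (gamma_word n a @ rho_word p @ [y]) = cls n (gamma_word n a @ rho_word p @ rw i)"
      using ap i by (intro cls_context[of n "[y]" "rw i" "gamma_word n a @ rho_word p" "[]", simplified]) auto
    then show ?thesis using step ap i by (intro exI[of _ a] exI[of _ "p@[i]"]) auto
  next
    case (Gg j)
    then have j: "1 \<le> j" "j \<le> n" using vg by auto
    have "cls n [y] = cls n (gw j)" using y Gg j by (cases s) (auto simp: gamma_neg)
    then have "cls n (gamma_word n a @ rho_word p @ [y]) = cls n (gamma_word n a @ (rho_word p @ gw j))"
      using ap j by (intro cls_context[of n "[y]" "gw j" "gamma_word n a @ rho_word p" "[]", simplified]) auto
    also have "\<dots> = cls n (gamma_word n a @ (gw (rho_perm p j) @ rho_word p))"
      using ap j by (intro cls_append_left rho_word_gamma) auto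
    also have "\<dots> = cls n ((gamma_word n a @ gw (rho_perm p j)) @ rho_word p)" by simp
    also have "\<dots> = cls n (gamma_word n (a(rho_perm p j := \<not> a (rho_perm p j))) @ rho_word p)"
      using ap j rho_perm_range[of n p j] by (intro cls_append_right gamma_word_toggle) auto
    finally show ?thesis using step ap by blast
  qed
qed

lemma signed_perm_gamma_word_on:
  "distinct L
    \<Longrightarrow> signed_perm (gamma_word_on a L) (j,b) = (j, b \<noteq> (a j \<and> j \<in> set L))"
  by (induction L arbitrary: b) auto

lemma signed_perm_rho_word: "signed_perm (rho_word p) (j,b) = (rho_perm p j, b)"
  by (induction p arbitrary: j) auto

lemma signed_perm_gamma_word: "signed_perm (gamma_word n a) (j,b) = (j, b \<noteq> (a j \<and> 1 \<le> j \<and> j \<le> n))"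
  unfolding gamma_word_def by (subst signed_perm_gamma_word_on) auto

lemma word_perm_gamma_word[simp]: "word_perm (gamma_word n a) = id"
  using signed_perm_gamma_word fst_signed_perm by (metis eq_id_iff fst_conv)

lemma sign_flips_gamma_word: "sign_flips (gamma_word n a) j = (a j \<and> 1 \<le> j \<and> j \<le> n)"
  unfolding sign_flips_def signed_perm_gamma_word by auto

lemma sigma_free_trivial:
  assumes "sigma_free u" "u \<in> words n" "signed_perm u = id"
  shows "cls n u = cls n []"
proof -
  obtain a p where ap: "rho_idx n p" "cls n u = cls n (gamma_word n a @ rho_word p)"
    using sigma_free_normal_form assms by blast
  have trivial: "signed_perm (gamma_word n a @ rho_word p) = id"
    using signed_perm_cls[OF assms(2) ap(2)] assms(3) by simp
  have eq: "rho_perm p j = j \<and> \<not> (a j \<and> 1 \<le> j \<and> j \<le> n)" for j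
    using fun_cong[OF trivial, of "(j, False)"] by (auto simp: signed_perm_rho_word signed_perm_gamma_word)
  then have perm: "rho_perm p = id"
    by (auto simp: fun_eq_iff)
  have "gamma_word n a = []"
    using eq by (intro gamma_word_empty) blast
  then show ?thesis
    using ap rho_word_trivial[OF ap(1) perm] by simp
qed

lemma sigma_free_simps[simp]: "sigma_free []" "sigma_free (u@v) \<longleftrightarrow> sigma_free u \<and> sigma_free v"
  "sigma_free (rho_word p)" "sigma_free (rw i)" "sigma_free (gw i)" "sigma_free [(Gg i, b)]" "sigma_free [(Rg i, b)]"
  by (auto simp: sigma_free_def rho_word_def)

lemma sigma_free_Cons[simp]: "sigma_free ((Rg i, b) # u) \<longleftrightarrow> sigma_free u" "sigma_free ((Gg i, b) # u) \<longleftrightarrow> sigma_free u"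
  "sigma_free ((Sg i, b) # u) \<longleftrightarrow> False"
  by (auto simp: sigma_free_def)

lemma transpose_range: "1 \<le> m \<Longrightarrow> m < n \<Longrightarrow> (Suc 0 \<le> Transposition.transpose m (Suc m) j) = (Suc 0 \<le> j)"
  "1 \<le> m \<Longrightarrow> m < n \<Longrightarrow> (Transposition.transpose m (Suc m) j \<le> n) = (j \<le> n)"
  by (auto simp: transpose_def)

lemma sigma_free_gamma_word_on: "sigma_free (gamma_word_on a L)" by (induction L) (auto simp: sigma_free_def)

lemma sigma_free_gamma_word[simp]: "sigma_free (gamma_word n a)" by (simp add: gamma_word_def sigma_free_gamma_word_on)

lemma sigma_free_inv_word[simp]: "sigma_free (inv_word u) \<longleftrightarrow> sigma_free u"
  by (auto simp: sigma_free_def inv_word_def inv_letter_def)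

lemma sigma_free_eqI:
  assumes "sigma_free u" "sigma_free v" "u \<in> words n" "v \<in> words n" "signed_perm u = signed_perm v"
  shows "cls n u = cls n v"
proof -
  have "signed_perm (v @ inv_word v) = id"
    using signed_perm_cls[OF _ cls_append_inv_word[of v n]] assms by simp
  then have F1: "signed_perm (u @ inv_word v) = id"
    using assms(5) by simp
  have c: "cls n (u @ inv_word v) = cls n []"
    using assms F1 by (intro sigma_free_trivial) auto
  have "cls n u = cls n (u @ (inv_word v @ v))" using cls_append_left[OF cls_inv_word_append[of v n, symmetric], of u] assms by simp
  also have "\<dots> = cls n ((u @ inv_word v) @ v)" by simp
  also have "\<dots> = cls n ([] @ v)" using c assms by (intro cls_append_right) auto
  finally show ?thesis by simp
qed

lemma rho_gamma_word:
  assumes "1 \<le> m" "m < n"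
  shows "cls n (rw m @ gamma_word n a) = cls n (gamma_word n (a \<circ> Transposition.transpose m (Suc m)) @ rw m)"
proof (rule sigma_free_eqI)
  show "signed_perm (rw m @ gamma_word n a) = signed_perm (gamma_word n (a \<circ> Transposition.transpose m (Suc m)) @ rw m)"
    using assms by (simp add: fun_eq_iff signed_perm_gamma_word transpose_range)
qed (use assms in auto)

lemma gamma_word_rho:
  assumes "1 \<le> m" "m < n"
  shows "cls n (gamma_word n a @ rw m) = cls n (rw m @ gamma_word n (a \<circ> Transposition.transpose m (Suc m)))"
proof (rule sigma_free_eqI)
  show "signed_perm (gamma_word n a @ rw m) = signed_perm (rw m @ gamma_word n (a \<circ> Transposition.transpose m (Suc m)))"
    using assms by (simp add: fun_eq_iff signed_perm_gamma_word transpose_range)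
qed (use assms in auto)

lemma gamma_gamma_word:
  assumes "1 \<le> m" "m \<le> n"
  shows "cls n (gw m @ gamma_word n a) = cls n (gamma_word n (a(m := \<not> a m)))"
proof (rule sigma_free_eqI)
  show "signed_perm (gw m @ gamma_word n a) = signed_perm (gamma_word n (a(m := \<not> a m)))"
    using assms by (auto simp: fun_eq_iff signed_perm_gamma_word)
qed (use assms in auto)

lemma gamma_word_gamma:
  assumes "1 \<le> m" "m \<le> n"
  shows "cls n (gamma_word n a @ gw m) = cls n (gamma_word n (a(m := \<not> a m)))"
proof (rule sigma_free_eqI)
  show "signed_perm (gamma_word n a @ gw m) = signed_perm (gamma_word n (a(m := \<not> a m)))"
    using assms by (auto simp: fun_eq_iff signed_perm_gamma_word)
qed (use assms in auto)

lemma gamma_gamma_word_commute: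
  assumes "1 \<le> m" "m \<le> n"
  shows "cls n (gw m @ gamma_word n a) = cls n (gamma_word n a @ gw m)"
  using gamma_gamma_word[OF assms] gamma_word_gamma[OF assms] by simp

lemma gamma_word_mult: "cls n (gamma_word n a @ gamma_word n b) = cls n (gamma_word n (\<lambda>j. a j \<noteq> b j))"
  by (rule sigma_free_eqI) (auto simp: fun_eq_iff signed_perm_gamma_word)

lemma gamma_word_cong:
  "\<forall>j. 1 \<le> j \<and> j \<le> n \<longrightarrow> a j = b j
    \<Longrightarrow> gamma_word n a = gamma_word n b"
  unfolding gamma_word_def by (rule gamma_word_on_cong) auto

lemma gamma_eq_gamma_word: "1 \<le> j \<Longrightarrow> j \<le> n \<Longrightarrow> gamma n j = cls n (gamma_word n (\<lambda>i. i = j))"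
  unfolding gamma_def by (rule sigma_free_eqI) (auto simp: fun_eq_iff signed_perm_gamma_word)

section \<open>Conjugating the \<open>x\<^sub>k\<^sub>l\<close>\<close>

definition rho_far :: "nat \<Rightarrow> word \<Rightarrow> bool" where
  "rho_far m w = (\<forall>x\<in>set w. snd x \<and> (case fst x of Rg i \<Rightarrow> (i+2 \<le> m \<or> m+2 \<le> i) | Sg i \<Rightarrow> (i+2 \<le> m \<or> m+2 \<le> i) | Gg _ \<Rightarrow> False))"

definition gamma_far :: "nat \<Rightarrow> word \<Rightarrow> bool" where
  "gamma_far m w = (\<forall>x\<in>set w. snd x \<and> (case fst x of Rg i \<Rightarrow> m \<noteq> i \<and> m \<noteq> Suc i | Sg i \<Rightarrow> m \<noteq> i \<and> m \<noteq> Suc i | Gg _ \<Rightarrow> False))"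

lemma rho_far_simps[simp]: "rho_far m []" "rho_far m (u@v) \<longleftrightarrow> rho_far m u \<and> rho_far m v"
  "rho_far m (rho_word p) \<longleftrightarrow> (\<forall>i\<in>set p. i+2 \<le> m \<or> m+2 \<le> i)"
  "rho_far m (sw i) \<longleftrightarrow> (i+2 \<le> m \<or> m+2 \<le> i)" "rho_far m (rw i) \<longleftrightarrow> (i+2 \<le> m \<or> m+2 \<le> i)"
  by (auto simp: rho_far_def rho_word_def)

lemma gamma_far_simps[simp]: "gamma_far m []" "gamma_far m (u@v) \<longleftrightarrow> gamma_far m u \<and> gamma_far m v"
  "gamma_far m (rho_word p) \<longleftrightarrow> (\<forall>i\<in>set p. m \<noteq> i \<and> m \<noteq> Suc i)"
  "gamma_far m (sw i) \<longleftrightarrow> (m \<noteq> i \<and> m \<noteq> Suc i)" "gamma_far m (rw i) \<longleftrightarrow> (m \<noteq> i \<and> m \<noteq> Suc i)"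
  by (auto simp: gamma_far_def rho_word_def)

lemma rho_far_Cons[simp]: "rho_far m ((Sg i, b) # w) \<longleftrightarrow> b \<and> (i+2 \<le> m \<or> m+2 \<le> i) \<and> rho_far m w"
  "rho_far m ((Rg i, b) # w) \<longleftrightarrow> b \<and> (i+2 \<le> m \<or> m+2 \<le> i) \<and> rho_far m w"
  "rho_far m ((Gg i, b) # w) \<longleftrightarrow> False"
  by (auto simp: rho_far_def)

lemma gamma_far_Cons[simp]: "gamma_far m ((Sg i, b) # w) \<longleftrightarrow> b \<and> m \<noteq> i \<and> m \<noteq> Suc i \<and> gamma_far m w"
  "gamma_far m ((Rg i, b) # w) \<longleftrightarrow> b \<and> m \<noteq> i \<and> m \<noteq> Suc i \<and> gamma_far m w"
  "gamma_far m ((Gg i, b) # w) \<longleftrightarrow> False"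
  by (auto simp: gamma_far_def)

lemma rho_far_commute_word:
  "1 \<le> m \<Longrightarrow> m < n \<Longrightarrow> w \<in> words n \<Longrightarrow> rho_far m w
    \<Longrightarrow> cls n (rw m @ w) = cls n (w @ rw m)"
proof (induction w)
  case Nil then show ?case by simp
next
  case (Cons x w)
  obtain g where x: "x = (g, True)" using Cons.prems by (cases x) (auto simp: rho_far_def)
  have xw: "rho_far m w" "w \<in> words n" using Cons.prems by (auto simp: rho_far_def)
  have c1: "cls n (rw m @ [x]) = cls n ([x] @ rw m)"
  proof (cases g)
    case (Sg i) then show ?thesis using Cons.prems x sigma_rho_far_commute[of i n m] by (auto simp: rho_far_def)
  next
    case (Rg i) then show ?thesis using Cons.prems x rho_far_commute[of i n m] by (auto simp: rho_far_def)
  next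
    case (Gg i) then show ?thesis using Cons.prems x by (auto simp: rho_far_def)
  qed
  have "cls n (rw m @ x # w) = cls n ((rw m @ [x]) @ w)" by simp
  also have "\<dots> = cls n (([x] @ rw m) @ w)" using c1 xw by (intro cls_append_right) auto
  also have "\<dots> = cls n ([x] @ (rw m @ w))" by simp
  also have "\<dots> = cls n ([x] @ (w @ rw m))" using Cons xw by (intro cls_append_left) auto
  finally show ?case by simp
qed

lemma gamma_far_commute_word:
  "1 \<le> m \<Longrightarrow> m \<le> n \<Longrightarrow> w \<in> words n \<Longrightarrow> gamma_far m w
    \<Longrightarrow> cls n (gw m @ w) = cls n (w @ gw m)"
proof (induction w)
  case Nil then show ?case by simp
next
  case (Cons x w)
  obtain g where x: "x = (g, True)" using Cons.prems by (cases x) (auto simp: gamma_far_def)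
  have xw: "gamma_far m w" "w \<in> words n" using Cons.prems by (auto simp: gamma_far_def)
  have c1: "cls n (gw m @ [x]) = cls n ([x] @ gw m)"
  proof (cases g)
    case (Sg i) then show ?thesis using Cons.prems x gamma_sigma_commute[of i n m] by (auto simp: gamma_far_def)
  next
    case (Rg i) then show ?thesis using Cons.prems x gamma_rho_commute[of i n m] by (auto simp: gamma_far_def)
  next
    case (Gg i) then show ?thesis using Cons.prems x by (auto simp: gamma_far_def)
  qed
  have "cls n (gw m @ x # w) = cls n ((gw m @ [x]) @ w)" by simp
  also have "\<dots> = cls n (([x] @ gw m) @ w)" using c1 xw by (intro cls_append_right) auto
  also have "\<dots> = cls n ([x] @ (gw m @ w))" by simp
  also have "\<dots> = cls n ([x] @ (w @ gw m))" using Cons xw by (intro cls_append_left) auto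
  finally show ?case by simp
qed

lemma rho_far_conj: "1 \<le> m \<Longrightarrow> m < n \<Longrightarrow> w \<in> words n \<Longrightarrow> rho_far m w \<Longrightarrow> cls n (rw m @ w @ rw m) = cls n w"
proof -
  assume a: "1 \<le> m" "m < n" "w \<in> words n" "rho_far m w"
  have "cls n (rw m @ w @ rw m) = cls n ((rw m @ w) @ rw m)" by simp
  also have "\<dots> = cls n ((w @ rw m) @ rw m)" using a rho_far_commute_word by (intro cls_append_right) auto
  also have "\<dots> = cls n (w @ (rw m @ rw m))" by simp
  also have "\<dots> = cls n (w @ [])" using a by (intro cls_append_left rho_rho) auto
  finally show ?thesis by simp
qed

lemma gamma_far_conj:
  "1 \<le> m \<Longrightarrow> m \<le> n \<Longrightarrow> w \<in> words n \<Longrightarrow> gamma_far m w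
    \<Longrightarrow> cls n (gw m @ w @ gw m) = cls n w"
proof -
  assume a: "1 \<le> m" "m \<le> n" "w \<in> words n" "gamma_far m w"
  have "cls n (gw m @ w @ gw m) = cls n ((gw m @ w) @ gw m)" by simp
  also have "\<dots> = cls n ((w @ gw m) @ gw m)" using a gamma_far_commute_word by (intro cls_append_right) auto
  also have "\<dots> = cls n (w @ (gw m @ gw m))" by simp
  also have "\<dots> = cls n (w @ [])" using a by (intro cls_append_left gamma_gamma) auto
  finally show ?thesis by simp
qed

lemma rho_rho_conj_sigma:
  "1 \<le> i \<Longrightarrow> Suc i < n
    \<Longrightarrow> cls n (rw i @ rw (Suc i) @ sw i @ rw (Suc i) @ rw i) = cls n (sw (Suc i))"
proof -
  assume i: "1 \<le> i" "Suc i < n"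
  have "cls n (rw i @ rw (Suc i) @ sw i @ rw (Suc i) @ rw i) = cls n ((rw i @ rw (Suc i) @ sw i) @ rw (Suc i) @ rw i)" by simp
  also have "\<dots> = cls n ((sw (Suc i) @ rw i @ rw (Suc i)) @ rw (Suc i) @ rw i)"
    using rho_rho_sigma[of i n] i by (intro cls_append_right) auto
  also have "\<dots> = cls n (sw (Suc i) @ rw i @ (rw (Suc i) @ rw (Suc i)) @ rw i)" by simp
  also have "\<dots> = cls n (sw (Suc i) @ rw i @ [] @ rw i)"
    using rho_rho[of "Suc i" n] i cls_context[of n "rw (Suc i) @ rw (Suc i)" "[]" "sw (Suc i) @ rw i" "rw i"] by simp
  also have "\<dots> = cls n (sw (Suc i) @ (rw i @ rw i))" by simp
  also have "\<dots> = cls n (sw (Suc i) @ [])" using i by (intro cls_append_left rho_rho) auto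
  finally show ?thesis by simp
qed

lemma rho_conj_sigma_succ:
  "1 \<le> i \<Longrightarrow> Suc i < n
    \<Longrightarrow> cls n (rw i @ sw (Suc i) @ rw i) = cls n (rw (Suc i) @ sw i @ rw (Suc i))"
proof -
  assume i: "1 \<le> i" "Suc i < n"
  have "cls n (rw i @ sw (Suc i) @ rw i) = cls n (rw i @ (rw i @ rw (Suc i) @ sw i @ rw (Suc i) @ rw i) @ rw i)"
    using cls_context[OF rho_rho_conj_sigma[OF i, symmetric], of "rw i" "rw i"] i by simp
  also have "\<dots> = cls n ((rw i @ rw i) @ (rw (Suc i) @ sw i @ rw (Suc i)) @ (rw i @ rw i))" by simp
  also have "\<dots> = cls n ([] @ (rw (Suc i) @ sw i @ rw (Suc i)) @ (rw i @ rw i))"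
    using i by (intro cls_append_right rho_rho) auto
  also have "\<dots> = cls n ((rw (Suc i) @ sw i @ rw (Suc i)) @ (rw i @ rw i))" by simp
  also have "\<dots> = cls n ((rw (Suc i) @ sw i @ rw (Suc i)) @ [])"
    using i by (intro cls_append_left rho_rho) auto
  finally show ?thesis by simp
qed

lemma xw_lt: "k < l \<Longrightarrow> xw k l = rho_word (rev [Suc k..<l]) @ sw k @ rho_word [Suc k..<l]"
  by (simp add: xw_def rup_eq_rho_word rev_rho_word)

lemma xw_gt: "l < k \<Longrightarrow> xw k l = rho_word (rev [l..<k]) @ sw l @ rho_word [l..<k]"
  by (simp add: xw_def rup_eq_rho_word rev_rho_word)

lemma rho_conj_context:
  assumes "A \<in> words n" "B \<in> words n" "M \<in> words n" "1 \<le> m" "m < n" "1 \<le> m'" "m' < n"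
    "cls n (rw m @ A) = cls n (A @ rw m')" "cls n (B @ rw m) = cls n (rw m' @ B)"
    "cls n (rw m' @ M @ rw m') = cls n M'"
  shows "cls n (rw m @ A @ M @ B @ rw m) = cls n (A @ M' @ B)"
proof -
  have "cls n (rw m @ A @ M @ B @ rw m) = cls n ((rw m @ A) @ M @ (B @ rw m))" by simp
  also have "\<dots> = cls n ((A @ rw m') @ M @ (B @ rw m))" using assms by (intro cls_append_right) auto
  also have "\<dots> = cls n ((A @ rw m') @ M @ (rw m' @ B))" using assms by (intro cls_append_left) auto
  also have "\<dots> = cls n (A @ (rw m' @ M @ rw m') @ B)" by simp
  also have "\<dots> = cls n (A @ M' @ B)" using assms by (intro cls_context) auto
  finally show ?thesis .
qed

lemma rho_rho_conj: "1 \<le> m \<Longrightarrow> m < n \<Longrightarrow> w \<in> words n \<Longrightarrow> cls n (rw m @ rw m @ w @ rw m @ rw m) = cls n w"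
proof -
  assume a: "1 \<le> m" "m < n" "w \<in> words n"
  have "cls n (rw m @ rw m @ w @ rw m @ rw m) = cls n ((rw m @ rw m) @ w @ (rw m @ rw m))" by simp
  also have "\<dots> = cls n ([] @ w @ (rw m @ rw m))" using a by (intro cls_append_right rho_rho) auto
  also have "\<dots> = cls n (w @ (rw m @ rw m))" by simp
  also have "\<dots> = cls n (w @ [])" using a by (intro cls_append_left rho_rho) auto
  finally show ?thesis by simp
qed

lemma xw_words: "1 \<le> k \<Longrightarrow> k \<le> n \<Longrightarrow> 1 \<le> l \<Longrightarrow> l \<le> n \<Longrightarrow> k \<noteq> l \<Longrightarrow> xw k l \<in> words n"
  by (cases "k < l") (auto simp: xw_lt xw_gt)

lemma xw_Suc: "xw i (Suc i) = sw i"
  by (simp add: xw_lt)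

lemma xw_Suc_right: "k < l \<Longrightarrow> xw k (Suc l) = rw l @ xw k l @ rw l"
  by (simp add: xw_lt)

lemma rho_conj_swap:
  assumes "cls n (rw m @ u @ rw m) = cls n v" "1 \<le> m" "m < n" "u \<in> words n"
  shows "cls n (rw m @ v @ rw m) = cls n u"
proof -
  have "cls n (rw m @ v @ rw m) = cls n (rw m @ (rw m @ u @ rw m) @ rw m)"
    using assms by (intro cls_context) auto
  also have "\<dots> = cls n u"
    using rho_rho_conj assms by simp
  finally show ?thesis .
qed

lemma rho_conj_x_lt_fixed:
  assumes kl: "1 \<le> k" "k < l" "l \<le> n" and m: "1 \<le> m" "m < n"
    and far: "m \<noteq> k" "Suc m \<noteq> k" "m \<noteq> l" "Suc m \<noteq> l"
  shows "cls n (rw m @ xw k l @ rw m) = cls n (xw k l)"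
proof -
  define P where "P = [Suc k..<l]"
  have x: "xw k l = rho_word (rev P) @ sw k @ rho_word P"
    unfolding P_def using kl by (simp add: xw_lt)
  have wP: "rho_word P \<in> words n" "rho_word (rev P) \<in> words n"
    unfolding P_def using kl by auto
  consider "Suc m < k \<or> l < m" | "k < m" "Suc (Suc m) \<le> l"
    using far by linarith
  then show ?thesis
  proof cases
    case 1
    then show ?thesis using kl m wP unfolding x P_def by (intro rho_far_conj) auto
  next
    case 2
    have "cls n (rw m @ rho_word (rev P) @ sw k @ rho_word P @ rw m) = cls n (rho_word (rev P) @ sw k @ rho_word P)"
    proof (rule rho_conj_context[where m' = "Suc m"])
      show "cls n (rw m @ rho_word (rev P)) = cls n (rho_word (rev P) @ rw (Suc m))"
        unfolding P_def using 2 kl by (intro rho_word_rev_upt_shift) auto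
      show "cls n (rho_word P @ rw m) = cls n (rw (Suc m) @ rho_word P)"
        unfolding P_def using 2 kl by (intro rho_word_upt_shift) auto
      show "cls n (rw (Suc m) @ sw k @ rw (Suc m)) = cls n (sw k)"
        using 2 kl by (intro rho_far_conj) auto
    qed (use wP 2 kl m in auto)
    then show ?thesis unfolding x by simp
  qed
qed

lemma rho_conj_x_pred:
  assumes "1 \<le> m" "Suc m < l" "l \<le> n"
  shows "cls n (rw m @ xw (Suc m) l @ rw m) = cls n (xw m l)"
proof -
  define P where "P = [Suc (Suc m)..<l]"
  have x: "xw (Suc m) l = rho_word (rev P) @ sw (Suc m) @ rho_word P"
    unfolding P_def using assms by (simp add: xw_lt)
  have x': "xw m l = rho_word (rev P) @ (rw (Suc m) @ sw m @ rw (Suc m)) @ rho_word P"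
    unfolding P_def using assms by (simp add: xw_lt upt_conv_Cons)
  have wP: "rho_word P \<in> words n" "rho_word (rev P) \<in> words n"
    unfolding P_def using assms by auto
  have "cls n (rw m @ rho_word (rev P) @ sw (Suc m) @ rho_word P @ rw m)
      = cls n (rho_word (rev P) @ (rw (Suc m) @ sw m @ rw (Suc m)) @ rho_word P)"
  proof (rule rho_conj_context[where m' = m])
    show "cls n (rw m @ rho_word (rev P)) = cls n (rho_word (rev P) @ rw m)"
      unfolding P_def using assms by (intro rho_word_commute') auto
    show "cls n (rho_word P @ rw m) = cls n (rw m @ rho_word P)"
      unfolding P_def using assms by (intro rho_word_commute) auto
    show "cls n (rw m @ sw (Suc m) @ rw m) = cls n (rw (Suc m) @ sw m @ rw (Suc m))"
      using assms by (intro rho_conj_sigma_succ) auto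
  qed (use wP assms in auto)
  then show ?thesis unfolding x x' by simp
qed

lemma rho_conj_x_lt:
  assumes kl: "1 \<le> k" "k < l" "l \<le> n" and m: "1 \<le> m" "m < n"
  shows "cls n (rw m @ xw k l @ rw m)
    = cls n (xw (Transposition.transpose m (Suc m) k) (Transposition.transpose m (Suc m) l))"
proof -
  consider "m \<noteq> k" "Suc m \<noteq> k" "m \<noteq> l" "Suc m \<noteq> l" | "Suc m = k" | "m = k" "l = Suc k"
    | "m = k" "Suc k < l" | "Suc m = l" "k < m" | "m = l"
    using kl by linarith
  then show ?thesis
  proof cases
    case 1
    then show ?thesis using rho_conj_x_lt_fixed assms by (simp add: transpose_def)
  next
    case 2
    then show ?thesis using rho_conj_x_pred[of m l n] kl m by (simp add: transpose_def)
  next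
    case 3
    then show ?thesis by (simp add: xw_lt xw_gt transpose_def)
  next
    case 4
    have "cls n (rw m @ xw (Suc m) l @ rw m) = cls n (xw m l)"
      using 4 kl by (intro rho_conj_x_pred) auto
    then have "cls n (rw m @ xw m l @ rw m) = cls n (xw (Suc m) l)"
      by (rule rho_conj_swap) (use 4 kl m in \<open>auto intro: xw_words\<close>)
    then show ?thesis using 4 by (simp add: transpose_def)
  next
    case 5
    then have "cls n (rw m @ xw k l @ rw m) = cls n (xw k m)"
      using kl m rho_rho_conj[of m n "xw k m"] xw_Suc_right[of k m] by (simp add: xw_words)
    then show ?thesis using 5 by (simp add: transpose_def)
  next
    case 6
    then show ?thesis using kl xw_Suc_right[of k l] by (simp add: transpose_def)
  qed
qed

lemma rho_word_gamma_eq: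
  "rho_idx n p \<Longrightarrow> 1 \<le> j \<Longrightarrow> j \<le> n \<Longrightarrow> j' = rho_perm p j
    \<Longrightarrow> cls n (rho_word p @ gw j) = cls n (gw j' @ rho_word p)"
  using rho_word_gamma by metis

lemma gamma_rho_word_eq:
  "rho_idx n p \<Longrightarrow> 1 \<le> j \<Longrightarrow> j \<le> n \<Longrightarrow> j' = rho_perm p j
    \<Longrightarrow> cls n (gw j' @ rho_word p) = cls n (rho_word p @ gw j)"
  using rho_word_gamma by metis

lemma gamma_conj_context:
  assumes "A \<in> words n" "B \<in> words n" "M \<in> words n" "1 \<le> m" "m \<le> n" "1 \<le> m'" "m' \<le> n"
    "cls n (gw m @ A) = cls n (A @ gw m')" "cls n (B @ gw m) = cls n (gw m' @ B)"
    "cls n (gw m' @ M @ gw m') = cls n M'"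
  shows "cls n (gw m @ A @ M @ B @ gw m) = cls n (A @ M' @ B)"
proof -
  have "cls n (gw m @ A @ M @ B @ gw m) = cls n ((gw m @ A) @ M @ (B @ gw m))" by simp
  also have "\<dots> = cls n ((A @ gw m') @ M @ (B @ gw m))" using assms by (intro cls_append_right) auto
  also have "\<dots> = cls n ((A @ gw m') @ M @ (gw m' @ B))" using assms by (intro cls_append_left) auto
  also have "\<dots> = cls n (A @ (gw m' @ M @ gw m') @ B)" by simp
  also have "\<dots> = cls n (A @ M' @ B)" using assms by (intro cls_context) auto
  finally show ?thesis .
qed

lemma gamma_conj_x_lt:
  assumes kl: "1 \<le> k" "k < l" "l \<le> n" and m: "1 \<le> m" "m \<le> n" "m \<noteq> k" "m \<noteq> l"
  shows "cls n (gw m @ xw k l @ gw m) = cls n (xw k l)"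
proof -
  define P where "P = [Suc k..<l]"
  have x: "xw k l = rho_word (rev P) @ sw k @ rho_word P" unfolding P_def using kl by (simp add: xw_lt)
  have wP: "rho_word P \<in> words n" "rho_word (rev P) \<in> words n" unfolding P_def using kl by auto
  show ?thesis
  proof (cases "m < k \<or> l < m")
    case True
    show ?thesis using True kl m wP unfolding x P_def by (intro gamma_far_conj) auto
  next
    case False
    then have mm: "k < m" "m < l" using m by auto
    have "cls n (gw m @ rho_word (rev P) @ sw k @ rho_word P @ gw m) = cls n (rho_word (rev P) @ sw k @ rho_word P)"
    proof (rule gamma_conj_context[where m' = "Suc m"])
      show "cls n (gw m @ rho_word (rev P)) = cls n (rho_word (rev P) @ gw (Suc m))"
        unfolding P_def using mm kl by (intro gamma_rho_word_eq) (auto simp: rho_perm_rev_upt_shift)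
      show "cls n (rho_word P @ gw m) = cls n (gw (Suc m) @ rho_word P)"
        unfolding P_def using mm kl m by (intro rho_word_gamma_eq) (auto simp: rho_perm_upt_shift)
      show "cls n (gw (Suc m) @ sw k @ gw (Suc m)) = cls n (sw k)"
        using mm kl by (intro gamma_far_conj) auto
    qed (use wP mm kl m in auto)
    then show ?thesis using x by simp
  qed
qed

lemma x_gt_eq_gamma_conj:
  assumes kl: "1 \<le> l" "l < k" "k \<le> n"
  shows "cls n (xw k l) = cls n (gw k @ gw l @ xw l k @ gw l @ gw k)"
proof -
  define Q where "Q = [Suc l..<k]"
  define A where "A = rho_word (rev Q)"
  define B where "B = rho_word Q"
  have x: "xw k l = A @ (rw l @ sw l @ rw l) @ B" unfolding A_def B_def Q_def using kl by (simp add: xw_gt upt_conv_Cons)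
  have x2: "xw l k = A @ sw l @ B" unfolding A_def B_def Q_def using kl by (simp add: xw_lt)
  have w: "A \<in> words n" "B \<in> words n" unfolding A_def B_def Q_def using kl by auto
  have c1: "cls n (A @ gw (Suc l)) = cls n (gw k @ A)"
    unfolding A_def Q_def using kl by (intro rho_word_gamma_eq) (auto simp: rho_perm_rev_upt_start)
  have c2: "cls n (A @ gw l) = cls n (gw l @ A)"
  proof -
    have "rho_perm (rev Q) l = l" unfolding Q_def by (rule rho_perm_fixed) auto
    then show ?thesis unfolding A_def Q_def using kl by (intro rho_word_gamma_eq) auto
  qed
  have c3: "cls n (gw l @ B) = cls n (B @ gw l)"
  proof -
    have "rho_perm Q l = l" unfolding Q_def by (rule rho_perm_fixed) auto
    then show ?thesis unfolding B_def Q_def using kl by (intro gamma_rho_word_eq) auto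
  qed
  have c4: "cls n (gw (Suc l) @ B) = cls n (B @ gw k)"
    unfolding B_def Q_def using kl by (intro gamma_rho_word_eq) (auto simp: rho_perm_upt_end)
  have "cls n (xw k l) = cls n (A @ (gw (Suc l) @ gw l @ sw l @ gw l @ gw (Suc l)) @ B)"
    unfolding x using kl w by (intro cls_context rho_sigma_rho) auto
  also have "\<dots> = cls n ((A @ gw (Suc l)) @ (gw l @ sw l @ gw l @ gw (Suc l) @ B))" by simp
  also have "\<dots> = cls n ((gw k @ A) @ (gw l @ sw l @ gw l @ gw (Suc l) @ B))"
    using c1 w kl by (intro cls_append_right) auto
  also have "\<dots> = cls n (gw k @ (A @ gw l) @ (sw l @ gw l @ gw (Suc l) @ B))" by simp
  also have "\<dots> = cls n (gw k @ (gw l @ A) @ (sw l @ gw l @ gw (Suc l) @ B))"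
    using c2 w kl by (intro cls_context) auto
  also have "\<dots> = cls n ((gw k @ gw l @ A @ sw l @ gw l) @ (gw (Suc l) @ B))" by simp
  also have "\<dots> = cls n ((gw k @ gw l @ A @ sw l @ gw l) @ (B @ gw k))"
    using c4 w kl by (intro cls_append_left) auto
  also have "\<dots> = cls n ((gw k @ gw l @ A @ sw l) @ (gw l @ B) @ gw k)" by simp
  also have "\<dots> = cls n ((gw k @ gw l @ A @ sw l) @ (B @ gw l) @ gw k)"
    using c3 w kl by (intro cls_context) auto
  finally show ?thesis using x2 by simp
qed

lemma x_swap_gamma_conj:
  assumes "1 \<le> k" "k \<le> n" "1 \<le> l" "l \<le> n" "k \<noteq> l"
  shows "cls n (xw k l) = cls n (gw k @ gw l @ xw l k @ gw l @ gw k)"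
proof (cases "l < k")
  case True
  then show ?thesis using x_gt_eq_gamma_conj assms by auto
next
  case False
  have cancel: "cls n (gw k @ gw l @ gw l @ gw k) = cls n []"
    by (rule sigma_free_eqI) (use assms in \<open>auto simp: fun_eq_iff\<close>)
  have "cls n (xw l k) = cls n (gw l @ gw k @ xw k l @ gw k @ gw l)"
    using False assms by (intro x_gt_eq_gamma_conj) auto
  from cls_context[OF this, of "gw k @ gw l" "gw l @ gw k"]
  have "cls n (gw k @ gw l @ xw l k @ gw l @ gw k)
      = cls n (gw k @ gw l @ (gw l @ gw k @ xw k l @ gw k @ gw l) @ gw l @ gw k)"
    using assms by simp
  also have "\<dots> = cls n ((gw k @ gw l @ gw l @ gw k) @ xw k l @ (gw k @ gw l @ gw l @ gw k))"
    by simp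
  also have "\<dots> = cls n ([] @ xw k l @ [])"
    by (rule cls_append_cong3[OF cancel cancel])
  finally show ?thesis by simp
qed

lemma gamma_conj_x:
  assumes kl: "1 \<le> k" "k \<le> n" "1 \<le> l" "l \<le> n" "k \<noteq> l" and m: "1 \<le> m" "m \<le> n" "m \<noteq> k" "m \<noteq> l"
  shows "cls n (gw m @ xw k l @ gw m) = cls n (xw k l)"
proof (cases "k < l")
  case True
  then show ?thesis using gamma_conj_x_lt assms by auto
next
  case False
  have commute: "cls n (gw m @ gw k @ gw l) = cls n (gw k @ gw l @ gw m)"
    "cls n (gw l @ gw k @ gw m) = cls n (gw m @ gw l @ gw k)"
    by (rule sigma_free_eqI; use kl m in \<open>auto simp: fun_eq_iff\<close>)+
  have "cls n (gw m @ xw k l @ gw m) = cls n (gw m @ (gw k @ gw l @ xw l k @ gw l @ gw k) @ gw m)"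
    using x_swap_gamma_conj kl m by (intro cls_context) auto
  also have "\<dots> = cls n ((gw m @ gw k @ gw l) @ xw l k @ (gw l @ gw k @ gw m))"
    by simp
  also have "\<dots> = cls n ((gw k @ gw l @ gw m) @ xw l k @ (gw m @ gw l @ gw k))"
    by (rule cls_append_cong3[OF commute])
  also have "\<dots> = cls n (gw k @ gw l @ (gw m @ xw l k @ gw m) @ gw l @ gw k)"
    by simp
  also have "\<dots> = cls n (gw k @ gw l @ xw l k @ gw l @ gw k)"
    using cls_context[OF gamma_conj_x_lt[of l k n m], of "gw k @ gw l" "gw l @ gw k"] False kl m
    by simp
  also have "\<dots> = cls n (xw k l)"
    using x_swap_gamma_conj kl by simp
  finally show ?thesis .
qed

lemma rho_conj_x:
  assumes kl: "1 \<le> k" "k \<le> n" "1 \<le> l" "l \<le> n" "k \<noteq> l" and m: "1 \<le> m" "m < n"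
  shows "cls n (rw m @ xw k l @ rw m)
    = cls n (xw (Transposition.transpose m (Suc m) k) (Transposition.transpose m (Suc m) l))"
proof (cases "k < l")
  case True
  then show ?thesis using rho_conj_x_lt assms by auto
next
  case False
  let ?s = "Transposition.transpose m (Suc m)"
  have s: "1 \<le> ?s k" "?s k \<le> n" "1 \<le> ?s l" "?s l \<le> n" "?s k \<noteq> ?s l"
    using kl m by (auto simp: transpose_def)
  have swap: "cls n (rw m @ gw k @ gw l) = cls n (gw (?s k) @ gw (?s l) @ rw m)"
    "cls n (gw l @ gw k @ rw m) = cls n (rw m @ gw (?s l) @ gw (?s k))"
    by (rule sigma_free_eqI; use kl m in \<open>auto simp: fun_eq_iff transpose_def\<close>)+
  have "cls n (rw m @ xw k l @ rw m) = cls n (rw m @ (gw k @ gw l @ xw l k @ gw l @ gw k) @ rw m)"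
    using x_swap_gamma_conj kl m by (intro cls_context) auto
  also have "\<dots> = cls n ((rw m @ gw k @ gw l) @ xw l k @ (gw l @ gw k @ rw m))"
    by simp
  also have "\<dots> = cls n ((gw (?s k) @ gw (?s l) @ rw m) @ xw l k @ (rw m @ gw (?s l) @ gw (?s k)))"
    by (rule cls_append_cong3[OF swap])
  also have "\<dots> = cls n (gw (?s k) @ gw (?s l) @ (rw m @ xw l k @ rw m) @ gw (?s l) @ gw (?s k))"
    by simp
  also have "\<dots> = cls n (gw (?s k) @ gw (?s l) @ xw (?s l) (?s k) @ gw (?s l) @ gw (?s k))"
    using cls_context[OF rho_conj_x_lt[of l k n m], of "gw (?s k) @ gw (?s l)" "gw (?s l) @ gw (?s k)"]
      False kl m s by simp
  also have "\<dots> = cls n (xw (?s k) (?s l))"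
    using x_swap_gamma_conj[OF s] by simp
  finally show ?thesis .
qed

text \<open>\<open>twisted_x n w\<close>: \<open>w\<close> represents \<open>x\<^sub>k\<^sub>l\<close> conjugated by an element of \<open>\<langle>\<gamma>\<^sub>k, \<gamma>\<^sub>l\<rangle>\<close>
  (\<open>\<gamma>\<close>-words are involutions). For \<open>k < l\<close> these are the generators \<open>x\<^sub>k\<^sub>l\<^bsup>(0)\<^esup>\<close>,
  \<open>x\<^sub>k\<^sub>l\<^bsup>(k)\<^esup>\<close>, \<open>x\<^sub>k\<^sub>l\<^bsup>(l)\<^esup>\<close>, \<open>x\<^sub>k\<^sub>l\<^bsup>(kl)\<^esup>\<close> of \<open>HL\<^sub>n\<close>.\<close>

definition twisted_x :: "nat \<Rightarrow> word \<Rightarrow> bool" where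
  "twisted_x n w \<longleftrightarrow> (\<exists>a k l. 1 \<le> k \<and> k \<le> n \<and> 1 \<le> l \<and> l \<le> n \<and> k \<noteq> l
     \<and> (\<forall>j. a j \<longrightarrow> j = k \<or> j = l)
     \<and> cls n w = cls n (gamma_word n a @ xw k l @ gamma_word n a))"

lemma twisted_x_cls: "cls n w = cls n w' \<Longrightarrow> twisted_x n w' \<Longrightarrow> twisted_x n w"
  unfolding twisted_x_def by simp

lemma twisted_x_rho:
  assumes "twisted_x n w" "1 \<le> m" "m < n"
  shows "twisted_x n (rw m @ w @ rw m)"
proof -
  let ?s = "Transposition.transpose m (Suc m)"
  obtain a k l where kl: "1 \<le> k" "k \<le> n" "1 \<le> l" "l \<le> n" "k \<noteq> l"
    and supp: "\<forall>j. a j \<longrightarrow> j = k \<or> j = l"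
    and w: "cls n w = cls n (gamma_word n a @ xw k l @ gamma_word n a)"
    using assms(1) unfolding twisted_x_def by blast
  have wx: "xw k l \<in> words n" using kl xw_words by auto
  define a' where "a' = a \<circ> ?s"
  have "cls n (rw m @ w @ rw m) = cls n ((rw m @ gamma_word n a) @ xw k l @ (gamma_word n a @ rw m))"
    using cls_context[OF w, of "rw m" "rw m"] assms by simp
  also have "\<dots> = cls n ((gamma_word n a' @ rw m) @ xw k l @ (rw m @ gamma_word n a'))"
    unfolding a'_def by (rule cls_append_cong3[OF rho_gamma_word gamma_word_rho]) (use assms in auto)
  also have "\<dots> = cls n (gamma_word n a' @ (rw m @ xw k l @ rw m) @ gamma_word n a')"
    by simp
  also have "\<dots> = cls n (gamma_word n a' @ xw (?s k) (?s l) @ gamma_word n a')"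
    using assms kl by (intro cls_context rho_conj_x) auto
  finally have eq: "cls n (rw m @ w @ rw m) = cls n (gamma_word n a' @ xw (?s k) (?s l) @ gamma_word n a')" .
  have kl': "1 \<le> ?s k" "?s k \<le> n" "1 \<le> ?s l" "?s l \<le> n" "?s k \<noteq> ?s l"
    using kl assms by (auto simp: transpose_def)
  have supp': "\<forall>j. a' j \<longrightarrow> j = ?s k \<or> j = ?s l"
    using supp unfolding a'_def by (metis comp_apply transpose_involutory)
  show ?thesis
    unfolding twisted_x_def eq using kl' supp'
    by (intro exI[of _ a'] exI[of _ "?s k"] exI[of _ "?s l"]) simp
qed

lemma twisted_x_gamma:
  assumes "twisted_x n w" "1 \<le> m" "m \<le> n"
  shows "twisted_x n (gw m @ w @ gw m)"
proof -
  obtain a k l where kl: "1 \<le> k" "k \<le> n" "1 \<le> l" "l \<le> n" "k \<noteq> l"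
    and supp: "\<forall>j. a j \<longrightarrow> j = k \<or> j = l"
    and w: "cls n w = cls n (gamma_word n a @ xw k l @ gamma_word n a)"
    using assms(1) unfolding twisted_x_def by blast
  have wx: "xw k l \<in> words n" using kl xw_words by auto
  have unfold: "cls n (gw m @ w @ gw m) = cls n ((gw m @ gamma_word n a) @ xw k l @ (gamma_word n a @ gw m))"
    using cls_context[OF w, of "gw m" "gw m"] assms by simp
  show ?thesis
  proof (cases "m = k \<or> m = l")
    case True
    define a' where "a' = a(m := \<not> a m)"
    have "cls n (gw m @ w @ gw m) = cls n (gamma_word n a' @ xw k l @ gamma_word n a')"
      unfolding unfold a'_def
      by (rule cls_append_cong3[OF gamma_gamma_word gamma_word_gamma]) (use assms in auto)
    moreover have "\<forall>j. a' j \<longrightarrow> j = k \<or> j = l"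
      using supp True unfolding a'_def by auto
    ultimately show ?thesis
      unfolding twisted_x_def using kl by (intro exI[of _ a'] exI[of _ k] exI[of _ l]) simp
  next
    case False
    have "cls n (gw m @ w @ gw m) = cls n ((gamma_word n a @ gw m) @ xw k l @ (gw m @ gamma_word n a))"
      unfolding unfold
      by (rule cls_append_cong3[OF gamma_gamma_word_commute gamma_gamma_word_commute[symmetric]])
        (use assms in auto)
    also have "\<dots> = cls n (gamma_word n a @ (gw m @ xw k l @ gw m) @ gamma_word n a)"
      by simp
    also have "\<dots> = cls n (gamma_word n a @ xw k l @ gamma_word n a)"
      using assms kl False by (intro cls_context gamma_conj_x) auto
    finally show ?thesis
      unfolding twisted_x_def using kl supp by (intro exI[of _ a] exI[of _ k] exI[of _ l]) simp
  qed
qed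

lemma sigma_free_conj_sigma:
  "sigma_free d \<Longrightarrow> d \<in> words n \<Longrightarrow> 1 \<le> i \<Longrightarrow> i < n \<Longrightarrow> twisted_x n (d @ sw i @ inv_word d)"
proof (induction d)
  case Nil
  have "cls n (sw i) = cls n (gamma_word n (\<lambda>_. False) @ xw i (Suc i) @ gamma_word n (\<lambda>_. False))"
    by (simp add: gamma_word_empty xw_Suc)
  then show ?case
    unfolding twisted_x_def using Nil
    by (intro exI[of _ "\<lambda>_. False"] exI[of _ i] exI[of _ "Suc i"]) simp
next
  case (Cons y d)
  obtain g b where y: "y = (g, b)" by fastforce
  have IH: "twisted_x n (d @ sw i @ inv_word d)"
    using Cons y by (cases g) auto
  have unfold: "(y # d) @ sw i @ inv_word (y # d) = [y] @ (d @ sw i @ inv_word d) @ [inv_letter y]"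
    by (simp add: inv_word_def)
  show ?case
  proof (cases g)
    case (Sg j)
    then show ?thesis using Cons y by simp
  next
    case (Rg m)
    have m: "1 \<le> m" "m < n" using Cons.prems y Rg by auto
    have "cls n [y] = cls n (rw m)" "cls n [inv_letter y] = cls n (rw m)"
      using y Rg m by (cases b; simp add: rho_neg inv_letter_def)+
    then have "cls n ((y # d) @ sw i @ inv_word (y # d)) = cls n (rw m @ (d @ sw i @ inv_word d) @ rw m)"
      unfolding unfold by (rule cls_append_cong3)
    then show ?thesis using twisted_x_rho[OF IH m] twisted_x_cls by blast
  next
    case (Gg m)
    have m: "1 \<le> m" "m \<le> n" using Cons.prems y Gg by auto
    have "cls n [y] = cls n (gw m)" "cls n [inv_letter y] = cls n (gw m)"
      using y Gg m by (cases b; simp add: gamma_neg inv_letter_def)+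
    then have "cls n ((y # d) @ sw i @ inv_word (y # d)) = cls n (gw m @ (d @ sw i @ inv_word d) @ gw m)"
      unfolding unfold by (rule cls_append_cong3)
    then show ?thesis using twisted_x_gamma[OF IH m] twisted_x_cls by blast
  qed
qed

lemma conjB_cls:
  "x \<in> words n \<Longrightarrow> g \<in> words n
    \<Longrightarrow> conjB n (cls n x) (cls n g) = cls n (inv_word g @ x @ g)"
  unfolding conjB_def by (simp add: TVB_inv TVB_mult)

lemma gamma_mult:
  "1 \<le> i \<Longrightarrow> i \<le> n \<Longrightarrow> 1 \<le> j \<Longrightarrow> j \<le> n
    \<Longrightarrow> gamma n i \<otimes>\<^bsub>TVB n\<^esub> gamma n j = cls n (gw i @ gw j)"
  unfolding gamma_def by (simp add: TVB_mult)

lemma HL_gensI: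
  assumes "1 \<le> k" "k < l" "l \<le> n"
    "e \<in> {xg n k l, conjB n (xg n k l) (gamma n k), conjB n (xg n k l) (gamma n l),
      conjB n (xg n k l) (gamma n k \<otimes>\<^bsub>TVB n\<^esub> gamma n l)}"
  shows "e \<in> HL_gens n"
  unfolding HL_gens_def using assms by (intro UN_I[of k] UN_I[of l]) auto

lemma twisted_x_lt_in_HL_gens:
  assumes kl: "1 \<le> k" "k < l" "l \<le> n" and sup: "\<forall>j. a j \<longrightarrow> j = k \<or> j = l"
  shows "cls n (gamma_word n a @ xw k l @ gamma_word n a) \<in> HL_gens n"
proof -
  have wx: "xw k l \<in> words n" using kl by (simp add: xw_lt)
  have key: "cls n (gamma_word n a @ xw k l @ gamma_word n a) = cls n (c' @ xw k l @ c)"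
    if "sigma_free c" "c \<in> words n" "signed_perm c = signed_perm (gamma_word n a)" "sigma_free c'" "c' \<in> words n" "signed_perm c' = signed_perm (gamma_word n a)" for c c'
  proof -
    have "cls n (gamma_word n a) = cls n c" using that by (intro sigma_free_eqI) auto
    moreover have "cls n (gamma_word n a) = cls n c'" using that by (intro sigma_free_eqI) auto
    ultimately show ?thesis using cls_append_cong by metis
  qed
  have Fg: "signed_perm (gamma_word n a) (j,b) = (j, b \<noteq> (a j \<and> 1 \<le> j \<and> j \<le> n))" for j b by (rule signed_perm_gamma_word)
  consider "\<not> a k" "\<not> a l" | "a k" "\<not> a l" | "\<not> a k" "a l" | "a k" "a l" by blast
  then show ?thesis
  proof cases
    case 1
    then have "gamma_word n a = []" using sup by (intro gamma_word_empty) auto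
    then show ?thesis using kl by (intro HL_gensI[of k l]) (auto simp: xg_def)
  next
    case 2
    have "cls n (gamma_word n a @ xw k l @ gamma_word n a) = cls n ([(Gg k, False)] @ xw k l @ gw k)"
      by (rule key) (use kl sup 2 in \<open>auto simp: fun_eq_iff Fg\<close>)
    also have "\<dots> = conjB n (xg n k l) (gamma n k)"
      unfolding xg_def gamma_def using kl wx by (simp add: conjB_cls inv_word_def inv_letter_def)
    finally show ?thesis using kl by (intro HL_gensI[of k l]) auto
  next
    case 3
    have "cls n (gamma_word n a @ xw k l @ gamma_word n a) = cls n ([(Gg l, False)] @ xw k l @ gw l)"
      by (rule key) (use kl sup 3 in \<open>auto simp: fun_eq_iff Fg\<close>)
    also have "\<dots> = conjB n (xg n k l) (gamma n l)"
      unfolding xg_def gamma_def using kl wx by (simp add: conjB_cls inv_word_def inv_letter_def)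
    finally show ?thesis using kl by (intro HL_gensI[of k l]) auto
  next
    case 4
    have "cls n (gamma_word n a @ xw k l @ gamma_word n a) = cls n ([(Gg l, False), (Gg k, False)] @ xw k l @ (gw k @ gw l))"
      by (rule key) (use kl sup 4 in \<open>auto simp: fun_eq_iff Fg\<close>)
    also have "\<dots> = conjB n (xg n k l) (gamma n k \<otimes>\<^bsub>TVB n\<^esub> gamma n l)"
      unfolding xg_def using kl wx by (simp add: gamma_mult conjB_cls inv_word_def inv_letter_def)
    finally show ?thesis using kl by (intro HL_gensI[of k l]) auto
  qed
qed

lemma twisted_x_in_HL_gens:
  assumes "twisted_x n w"
  shows "cls n w \<in> HL_gens n"
proof -
  obtain a k l where kl: "1 \<le> k" "k \<le> n" "1 \<le> l" "l \<le> n" "k \<noteq> l"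
    and supp: "\<forall>j. a j \<longrightarrow> j = k \<or> j = l"
    and w: "cls n w = cls n (gamma_word n a @ xw k l @ gamma_word n a)"
    using assms unfolding twisted_x_def by blast
  show ?thesis
  proof (cases "k < l")
    case True
    then show ?thesis using twisted_x_lt_in_HL_gens kl supp w by auto
  next
    case False
    define a' where "a' = (\<lambda>j. if j = k \<or> j = l then \<not> a j else a j)"
    have flip: "cls n (gamma_word n a @ gw k @ gw l) = cls n (gamma_word n a')"
      "cls n (gw l @ gw k @ gamma_word n a) = cls n (gamma_word n a')"
      by (rule sigma_free_eqI; use kl in \<open>auto simp: fun_eq_iff signed_perm_gamma_word a'_def\<close>)+
    have "cls n w = cls n (gamma_word n a @ (gw k @ gw l @ xw l k @ gw l @ gw k) @ gamma_word n a)"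
      unfolding w using kl by (intro cls_context x_swap_gamma_conj) auto
    also have "\<dots> = cls n ((gamma_word n a @ gw k @ gw l) @ xw l k @ (gw l @ gw k @ gamma_word n a))"
      by simp
    also have "\<dots> = cls n (gamma_word n a' @ xw l k @ gamma_word n a')"
      by (rule cls_append_cong3[OF flip])
    moreover have "\<forall>j. a' j \<longrightarrow> j = l \<or> j = k"
      using supp unfolding a'_def by auto
    ultimately show ?thesis
      using twisted_x_lt_in_HL_gens[of l k n a'] False kl by simp
  qed
qed

definition del_sigma :: "word \<Rightarrow> word" where
  "del_sigma w = filter (\<lambda>x. case fst x of Sg _ \<Rightarrow> False | _ \<Rightarrow> True) w"

lemma del_sigma_Nil[simp]: "del_sigma [] = []" by (simp add: del_sigma_def)

lemma sigma_free_del_sigma[simp]: "sigma_free (del_sigma w)" by (auto simp: del_sigma_def sigma_free_def split: gen.splits)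

lemma del_sigma_words: "w \<in> words n \<Longrightarrow> del_sigma w \<in> words n" by (auto simp: del_sigma_def words_def)

lemma signed_perm_del_sigma: "signed_perm (del_sigma w) = signed_perm w"
  by (induction w) (auto simp: del_sigma_def split: gen.split)

lemma HL_gens_carrier: "HL_gens n \<subseteq> carrier (TVB n)"
proof -
  interpret G: group "TVB n" by (rule group_TVB)
  have x: "xg n i j \<in> carrier (TVB n)" if "1 \<le> i" "i < j" "j \<le> n" for i j
    unfolding xg_def using that by (intro cls_carrier) (simp add: xw_lt)
  have g: "gamma n i \<in> carrier (TVB n)" if "1 \<le> i" "i \<le> n" for i
    unfolding gamma_def using that by (intro cls_carrier) simp
  show ?thesis unfolding HL_gens_def conjB_def using x g by auto
qed

lemma del_sigma_append[simp]: "del_sigma (u @ v) = del_sigma u @ del_sigma v"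
  by (simp add: del_sigma_def)

lemma conj_sigma_in_HL:
  assumes "sigma_free d" "d \<in> words n" "1 \<le> i" "i < n"
  shows "cls n (d @ [(Sg i, b)] @ inv_word d) \<in> generate (TVB n) (HL_gens n)"
proof -
  have HL: "cls n (d @ sw i @ inv_word d) \<in> HL_gens n"
    using assms by (intro twisted_x_in_HL_gens sigma_free_conj_sigma)
  show ?thesis
  proof (cases b)
    case True
    then show ?thesis using generate.incl[OF HL] by simp
  next
    case False
    have "inv\<^bsub>TVB n\<^esub> cls n (d @ sw i @ inv_word d) = cls n (inv_word (d @ sw i @ inv_word d))"
      using assms by (simp add: TVB_inv)
    also have "inv_word (d @ sw i @ inv_word d) = d @ [(Sg i, b)] @ inv_word d"
      using False by (simp add: inv_word_Cons inv_letter_def)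
    finally have "inv\<^bsub>TVB n\<^esub> cls n (d @ sw i @ inv_word d) = cls n (d @ [(Sg i, b)] @ inv_word d)" .
    moreover have "inv\<^bsub>TVB n\<^esub> cls n (d @ sw i @ inv_word d) \<in> generate (TVB n) (HL_gens n)"
      by (rule generate.inv[OF HL])
    ultimately show ?thesis by simp
  qed
qed

lemma cls_snoc_eq_HL_mult:
  assumes "sigma_free d" "d \<in> words n" "valid_gen n (fst x)"
  shows "\<exists>z\<in>generate (TVB n) (HL_gens n). cls n (d @ [x]) = z \<otimes>\<^bsub>TVB n\<^esub> cls n (d @ del_sigma [x])"
proof (cases "\<exists>i. fst x = Sg i")
  case True
  then obtain i where i: "fst x = Sg i" by blast
  have "cls n (d @ [x] @ inv_word d) \<otimes>\<^bsub>TVB n\<^esub> cls n d = cls n ((d @ [x]) @ (inv_word d @ d))"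
    using assms by (simp add: TVB_mult)
  also have "\<dots> = cls n ((d @ [x]) @ [])"
    using assms by (intro cls_append_left cls_inv_word_append) auto
  finally have "cls n (d @ [x]) = cls n (d @ [x] @ inv_word d) \<otimes>\<^bsub>TVB n\<^esub> cls n (d @ del_sigma [x])"
    using i by (simp add: del_sigma_def)
  moreover have "cls n (d @ [x] @ inv_word d) \<in> generate (TVB n) (HL_gens n)"
    using conj_sigma_in_HL[of d n i "snd x"] assms i by (cases x) auto
  ultimately show ?thesis by blast
next
  case False
  then have "del_sigma [x] = [x]"
    by (auto simp: del_sigma_def split: gen.split)
  then show ?thesis
    using assms monoid.l_one[OF group.is_monoid[OF group_TVB]] cls_carrier[of "d @ [x]" n]
    by (intro bexI[OF _ generate.one]) simp_all
qed

lemma cls_eq_HL_mult_del_sigma: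
  "w \<in> words n \<Longrightarrow> \<exists>k\<in>generate (TVB n) (HL_gens n). cls n w = k \<otimes>\<^bsub>TVB n\<^esub> cls n (del_sigma w)"
proof (induction w rule: rev_induct)
  interpret G: group "TVB n" by (rule group_TVB)
  case Nil
  show ?case
    using generate.one G.l_one[OF cls_carrier[of "[]" n]] by fastforce
next
  interpret G: group "TVB n" by (rule group_TVB)
  have sub: "subgroup (generate (TVB n) (HL_gens n)) (TVB n)"
    by (rule G.generate_is_subgroup[OF HL_gens_carrier])
  case (snoc x w)
  define d where "d = del_sigma w"
  have d: "sigma_free d" "d \<in> words n" "valid_gen n (fst x)"
    using snoc.prems unfolding d_def by (auto intro: del_sigma_words)
  obtain k where k: "k \<in> generate (TVB n) (HL_gens n)" "cls n w = k \<otimes>\<^bsub>TVB n\<^esub> cls n d"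
    using snoc unfolding d_def by auto
  obtain z where z: "z \<in> generate (TVB n) (HL_gens n)"
    "cls n (d @ [x]) = z \<otimes>\<^bsub>TVB n\<^esub> cls n (d @ del_sigma [x])"
    using cls_snoc_eq_HL_mult[OF d] by blast
  have carrier: "k \<in> carrier (TVB n)" "z \<in> carrier (TVB n)"
    using k(1) z(1) subgroup.subset[OF sub] by auto
  have "cls n (w @ [x]) = cls n w \<otimes>\<^bsub>TVB n\<^esub> cls n [x]"
    using snoc.prems by (simp add: TVB_mult)
  also have "\<dots> = k \<otimes>\<^bsub>TVB n\<^esub> cls n d \<otimes>\<^bsub>TVB n\<^esub> cls n [x]"
    using k(2) by simp
  also have "\<dots> = k \<otimes>\<^bsub>TVB n\<^esub> (z \<otimes>\<^bsub>TVB n\<^esub> cls n (d @ del_sigma [x]))"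
    using d carrier z(2) by (simp add: G.m_assoc cls_carrier TVB_mult)
  also have "\<dots> = (k \<otimes>\<^bsub>TVB n\<^esub> z) \<otimes>\<^bsub>TVB n\<^esub> cls n (d @ del_sigma [x])"
    using d carrier by (simp add: G.m_assoc cls_carrier del_sigma_words)
  finally show ?case
    using subgroup.m_closed[OF sub k(1) z(1)] unfolding d_def by auto
qed

definition signed_kernel :: "nat \<Rightarrow> word set set" where
  "signed_kernel n = {cls n w | w. w \<in> words n \<and> signed_perm w = id}"

lemma signed_kernel_subgroup: "subgroup (signed_kernel n) (TVB n)"
proof -
  interpret G: group "TVB n" by (rule group_TVB)
  show ?thesis
  proof (rule G.subgroupI)
    show "signed_kernel n \<subseteq> carrier (TVB n)" unfolding signed_kernel_def TVB_carrier by auto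
    show "signed_kernel n \<noteq> {}" unfolding signed_kernel_def by (auto intro!: exI[of _ "[]"])
  next
    fix a assume "a \<in> signed_kernel n"
    then obtain w where w: "w \<in> words n" "signed_perm w = id" "a = cls n w" unfolding signed_kernel_def by auto
    have "signed_perm (inv_word w @ w) = signed_perm []" using signed_perm_cls[OF _ cls_inv_word_append[OF w(1)]] w by simp
    then have "signed_perm (inv_word w) = id" using w by simp
    then show "inv\<^bsub>TVB n\<^esub> a \<in> signed_kernel n" unfolding signed_kernel_def using w TVB_inv by auto
  next
    fix a b assume "a \<in> signed_kernel n" "b \<in> signed_kernel n"
    then obtain u v where "u \<in> words n" "signed_perm u = id" "a = cls n u" "v \<in> words n" "signed_perm v = id" "b = cls n v"
      unfolding signed_kernel_def by auto
    then show "a \<otimes>\<^bsub>TVB n\<^esub> b \<in> signed_kernel n" unfolding signed_kernel_def using TVB_mult by fastforce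
  qed
qed

lemma signed_perm_xw: "1 \<le> k \<Longrightarrow> k \<le> n \<Longrightarrow> 1 \<le> l \<Longrightarrow> l \<le> n \<Longrightarrow> k \<noteq> l \<Longrightarrow> signed_perm (xw k l) = id"
proof -
  have gen: "signed_perm (rho_word (rev p) @ sw i @ rho_word p) = id" for p i
  proof (rule ext)
    fix q :: "nat \<times> bool"
    obtain j b where q: "q = (j,b)" by fastforce
    have "rho_perm (rev p) (rho_perm p j) = j" using rho_perm_rev_inv[of p] by (metis comp_apply id_apply)
    then show "signed_perm (rho_word (rev p) @ sw i @ rho_word p) q = id q" using q by (simp add: signed_perm_rho_word)
  qed
  assume "1 \<le> k" "k \<le> n" "1 \<le> l" "l \<le> n" "k \<noteq> l"
  then show ?thesis using gen by (cases "k < l") (auto simp: xw_lt xw_gt)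
qed

lemma signed_kernel_conj:
  "x \<in> signed_kernel n \<Longrightarrow> h \<in> carrier (TVB n)
    \<Longrightarrow> conjB n x h \<in> signed_kernel n"
proof -
  assume x: "x \<in> signed_kernel n" and h: "h \<in> carrier (TVB n)"
  obtain w where w: "w \<in> words n" "signed_perm w = id" "x = cls n w" using x unfolding signed_kernel_def by auto
  obtain u where u: "u \<in> words n" "h = cls n u" using h unfolding TVB_carrier by auto
  have "signed_perm (inv_word u @ u) = signed_perm []" using signed_perm_cls[OF _ cls_inv_word_append[OF u(1)]] u by simp
  then have "signed_perm (inv_word u @ w @ u) = id" using w by (simp add: comp_assoc)
  then show ?thesis unfolding signed_kernel_def using w u conjB_cls by auto
qed

lemma HL_gens_signed_kernel: "HL_gens n \<subseteq> signed_kernel n"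
proof -
  have x: "xg n i j \<in> signed_kernel n" if "1 \<le> i" "i < j" "j \<le> n" for i j
    unfolding xg_def signed_kernel_def using that signed_perm_xw[of i n j] by (auto simp: xw_lt)
  have g: "gamma n i \<in> carrier (TVB n)" if "1 \<le> i" "i \<le> n" for i
    unfolding gamma_def using that by (intro cls_carrier) simp
  have gg: "gamma n i \<otimes>\<^bsub>TVB n\<^esub> gamma n j \<in> carrier (TVB n)" if "1 \<le> i" "i \<le> n" "1 \<le> j" "j \<le> n" for i j
    using that gamma_mult cls_carrier by simp
  show ?thesis unfolding HL_gens_def using x g gg signed_kernel_conj by auto
qed

lemma generate_HL_gens: "generate (TVB n) (HL_gens n) = signed_kernel n"
proof
  interpret G: group "TVB n" by (rule group_TVB)
  show "generate (TVB n) (HL_gens n) \<subseteq> signed_kernel n"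
    by (rule G.generate_subgroup_incl[OF HL_gens_signed_kernel signed_kernel_subgroup])
  show "signed_kernel n \<subseteq> generate (TVB n) (HL_gens n)"
  proof
    fix g assume "g \<in> signed_kernel n"
    then obtain w where w: "w \<in> words n" "signed_perm w = id" "g = cls n w" unfolding signed_kernel_def by auto
    obtain k where k: "k \<in> generate (TVB n) (HL_gens n)" "cls n w = k \<otimes>\<^bsub>TVB n\<^esub> cls n (del_sigma w)"
      using cls_eq_HL_mult_del_sigma[OF w(1)] by auto
    have wd: "del_sigma w \<in> words n" using del_sigma_words[OF w(1)] .
    have "cls n (del_sigma w) = cls n []"
      using w wd signed_perm_del_sigma by (intro sigma_free_trivial) auto
    moreover have "k \<in> carrier (TVB n)" using k(1) G.generate_is_subgroup[OF HL_gens_carrier] subgroup.subset by blast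
    ultimately have "cls n w = k" using k(2) by (simp add: TVB_one[symmetric])
    then show "g \<in> generate (TVB n) (HL_gens n)" using w k by simp
  qed
qed

section \<open>The retraction \<open>\<psi>\<^sub>H\<close>\<close>

lemma (in group) retraction_kernel_Int:
  assumes "subgroup A G" "A \<subseteq> H" "\<And>a. a \<in> A \<Longrightarrow> f a = a"
  shows "kernel (G\<lparr>carrier := H\<rparr>) (G\<lparr>carrier := A\<rparr>) f \<inter> A = {\<one>}"
  using assms subgroup.one_closed[OF assms(1)] unfolding kernel_def by auto

lemma (in group) retraction_kernel_set_mult:
  assumes H: "subgroup H G" and A: "subgroup A G" and AH: "A \<subseteq> H"
    and f: "f \<in> hom (G\<lparr>carrier := H\<rparr>) (G\<lparr>carrier := A\<rparr>)" and f_id: "\<And>a. a \<in> A \<Longrightarrow> f a = a"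
  shows "kernel (G\<lparr>carrier := H\<rparr>) (G\<lparr>carrier := A\<rparr>) f <#> A = H"
proof
  let ?K = "kernel (G\<lparr>carrier := H\<rparr>) (G\<lparr>carrier := A\<rparr>) f"
  show "?K <#> A \<subseteq> H"
    using AH subgroup.m_closed[OF H] unfolding set_mult_def kernel_def by fastforce
  show "H \<subseteq> ?K <#> A"
  proof
    fix g assume g: "g \<in> H"
    have fg: "f g \<in> A" using f g unfolding hom_def by auto
    have inv_fg: "inv (f g) \<in> A" using subgroup.m_inv_closed[OF A fg] .
    have "f (g \<otimes> inv (f g)) = f g \<otimes> f (inv (f g))"
      using f g inv_fg AH unfolding hom_def by auto
    also have "\<dots> = \<one>"
      using f_id[OF inv_fg] fg subgroup.subset[OF A] by auto
    finally have "g \<otimes> inv (f g) \<in> ?K"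
      using g inv_fg AH subgroup.m_closed[OF H] unfolding kernel_def by auto
    moreover have "g = (g \<otimes> inv (f g)) \<otimes> f g"
      using g fg subgroup.subset[OF H] subgroup.subset[OF A] by (auto simp: m_assoc subsetD)
    ultimately show "g \<in> ?K <#> A" using fg unfolding set_mult_def by blast
  qed
qed

definition psiH :: "nat \<Rightarrow> word set \<Rightarrow> word set" where
  "psiH n C = cls n (gamma_word n (sign_flips (SOME w. w \<in> C)))"

lemma psiH_cls: "w \<in> words n \<Longrightarrow> psiH n (cls n w) = cls n (gamma_word n (sign_flips w))"
  unfolding psiH_def using some_in_cls sign_flips_cls by metis

lemma sign_flips_append:
  "word_perm v = id
    \<Longrightarrow> sign_flips (u@v) j = (sign_flips v j \<noteq> sign_flips u j)"
proof -
  assume v: "word_perm v = id"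
  have "signed_perm v (j,False) = (j, sign_flips v j)" using signed_perm_eq[of v j False] v by simp
  then show ?thesis unfolding sign_flips_def using signed_perm_eq[of u j "sign_flips v j"] by (simp add: sign_flips_def)
qed

lemma gamma_in_A_set: "1 \<le> j \<Longrightarrow> j \<le> n \<Longrightarrow> gamma n j \<in> A_set n"
  unfolding A_set_def by (intro generate.incl) auto

lemma A_set_subset_gamma_words: "A_set n \<subseteq> range (\<lambda>a. cls n (gamma_word n a))"
proof
  fix x assume "x \<in> A_set n"
  then show "x \<in> range (\<lambda>a. cls n (gamma_word n a))"
    unfolding A_set_def
  proof (induction rule: generate.induct)
    case one
    have "gamma_word n (\<lambda>_. False) = []" by (rule gamma_word_empty) auto
    then show ?case by (metis TVB_one rangeI)
  next
    case (incl h)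
    then show ?case using gamma_eq_gamma_word by blast
  next
    case (inv h)
    then obtain j where j: "1 \<le> j" "j \<le> n" "h = gamma n j" by auto
    have "inv\<^bsub>TVB n\<^esub> h = cls n [(Gg j, False)]"
      using j TVB_inv[of "gw j" n] unfolding gamma_def by (simp add: inv_word_def inv_letter_def)
    also have "\<dots> = gamma n j"
      unfolding gamma_def using j(1,2) by (rule gamma_neg)
    finally show ?case using gamma_eq_gamma_word j by simp
  next
    case (eng h1 h2)
    then obtain a b where "h1 = cls n (gamma_word n a)" "h2 = cls n (gamma_word n b)" by auto
    then have "h1 \<otimes>\<^bsub>TVB n\<^esub> h2 = cls n (gamma_word n (\<lambda>j. a j \<noteq> b j))"
      using gamma_word_mult by (simp add: TVB_mult)
    then show ?case by simp
  qed
qed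

lemma gamma_word_on_in_A_set:
  "\<forall>j\<in>set L. 1 \<le> j \<and> j \<le> n
    \<Longrightarrow> cls n (gamma_word_on a L) \<in> A_set n"
proof (induction L rule: rev_induct)
  case Nil
  then show ?case using generate.one[of "TVB n"] unfolding A_set_def by (simp add: TVB_one)
next
  case (snoc k L)
  have k: "1 \<le> k" "k \<le> n" using snoc.prems by auto
  have "cls n (if a k then gw k else []) \<in> A_set n"
  proof (cases "a k")
    case True
    then show ?thesis using gamma_in_A_set[OF k] by (simp add: gamma_def)
  next
    case False
    then show ?thesis using generate.one[of "TVB n"] unfolding A_set_def by (simp add: TVB_one)
  qed
  moreover have "cls n (gamma_word_on a (L @ [k]))
      = cls n (gamma_word_on a L) \<otimes>\<^bsub>TVB n\<^esub> cls n (if a k then gw k else [])"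
    using snoc.prems k by (simp add: TVB_mult gamma_word_on_words)
  ultimately show ?case
    using snoc unfolding A_set_def by (auto intro: generate.eng)
qed

lemma A_set_eq: "A_set n = range (\<lambda>a. cls n (gamma_word n a))"
proof
  show "range (\<lambda>a. cls n (gamma_word n a)) \<subseteq> A_set n"
  proof
    fix x assume "x \<in> range (\<lambda>a. cls n (gamma_word n a))"
    then obtain a where x: "x = cls n (gamma_word n a)" by blast
    have "cls n (gamma_word_on a [1..<Suc n]) \<in> A_set n"
      by (rule gamma_word_on_in_A_set) auto
    then show "x \<in> A_set n"
      unfolding x gamma_word_def .
  qed
qed (rule A_set_subset_gamma_words)

lemma A_gens_carrier: "{gamma n j | j. 1 \<le> j \<and> j \<le> n} \<subseteq> carrier (TVB n)"
  unfolding gamma_def using cls_carrier by auto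

lemma A_subgroup: "subgroup (A_set n) (TVB n)"
  unfolding A_set_def by (rule group.generate_is_subgroup[OF group_TVB A_gens_carrier])

lemma A_set_subset_TVH: "A_set n \<subseteq> TVH_set n"
  unfolding A_set_eq using TVH_memI by auto

lemma psiH_A: "a \<in> A_set n \<Longrightarrow> psiH n a = a"
proof -
  assume "a \<in> A_set n"
  then obtain b where a: "a = cls n (gamma_word n b)" unfolding A_set_eq by auto
  have "gamma_word n (sign_flips (gamma_word n b)) = gamma_word n b" by (rule gamma_word_cong) (auto simp: sign_flips_gamma_word)
  then show ?thesis using a psiH_cls by simp
qed

lemma psiH_in_A: "x \<in> TVH_set n \<Longrightarrow> psiH n x \<in> A_set n"
  by (elim TVH_memE) (auto simp: psiH_cls A_set_eq)

lemma psiH_mult: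
  "x \<in> TVH_set n \<Longrightarrow> y \<in> TVH_set n
    \<Longrightarrow> psiH n (x \<otimes>\<^bsub>TVB n\<^esub> y) = psiH n x \<otimes>\<^bsub>TVB n\<^esub> psiH n y"
proof -
  assume "x \<in> TVH_set n" "y \<in> TVH_set n"
  then obtain u v where u: "u \<in> words n" "word_perm u = id" "x = cls n u"
    and v: "v \<in> words n" "word_perm v = id" "y = cls n v" by (metis TVH_memE)
  have "psiH n (x \<otimes>\<^bsub>TVB n\<^esub> y) = cls n (gamma_word n (sign_flips (u@v)))" using u v by (simp add: TVB_mult psiH_cls)
  also have "sign_flips (u@v) = (\<lambda>j. sign_flips u j \<noteq> sign_flips v j)" using sign_flips_append[OF v(2)] by auto
  also have "cls n (gamma_word n (\<lambda>j. sign_flips u j \<noteq> sign_flips v j)) = psiH n x \<otimes>\<^bsub>TVB n\<^esub> psiH n y"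
    using u v gamma_word_mult by (simp add: TVB_mult psiH_cls)
  finally show ?thesis .
qed

lemma TVH_simps[simp]: "carrier (TVH n) = TVH_set n" "monoid.mult (TVH n) = monoid.mult (TVB n)" "one (TVH n) = one (TVB n)"
  by (simp_all add: TVH_def)

lemma A_grp_simps[simp]: "carrier (A_grp n) = A_set n" "monoid.mult (A_grp n) = monoid.mult (TVB n)" "one (A_grp n) = one (TVB n)"
  by (simp_all add: A_grp_def)

lemma psiH_hom: "psiH n \<in> hom (TVH n) (A_grp n)"
  unfolding hom_def using psiH_in_A psiH_mult by auto

lemma group_A_grp: "group (A_grp n)"
  unfolding A_grp_def by (rule group.subgroup_imp_group[OF group_TVB A_subgroup])

lemma cls_gamma_word_eq_one: "cls n (gamma_word n a) = cls n [] \<longleftrightarrow> (\<forall>j. 1 \<le> j \<and> j \<le> n \<longrightarrow> \<not> a j)"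
proof
  assume "cls n (gamma_word n a) = cls n []"
  then have "signed_perm (gamma_word n a) = id"
    using signed_perm_cls[of "gamma_word n a" n "[]"] by simp
  then show "\<forall>j. 1 \<le> j \<and> j \<le> n \<longrightarrow> \<not> a j"
    by (auto simp: fun_eq_iff signed_perm_gamma_word)
qed (simp add: gamma_word_empty)

lemma kernel_psiH: "kernel (TVH n) (A_grp n) (psiH n) = signed_kernel n"
proof
  show "kernel (TVH n) (A_grp n) (psiH n) \<subseteq> signed_kernel n"
  proof
    fix x assume x: "x \<in> kernel (TVH n) (A_grp n) (psiH n)"
    then obtain w where w: "w \<in> words n" "word_perm w = id" "x = cls n w"
      unfolding kernel_def by (auto elim: TVH_memE)
    moreover have "psiH n x = cls n []"
      using x unfolding kernel_def by (simp add: TVB_one)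
    ultimately have "\<forall>j. 1 \<le> j \<and> j \<le> n \<longrightarrow> \<not> sign_flips w j"
      by (simp add: psiH_cls cls_gamma_word_eq_one)
    then show "x \<in> signed_kernel n"
      using w signed_perm_id_iff unfolding signed_kernel_def by blast
  qed
  show "signed_kernel n \<subseteq> kernel (TVH n) (A_grp n) (psiH n)"
  proof
    fix x assume "x \<in> signed_kernel n"
    then obtain w where w: "w \<in> words n" "signed_perm w = id" "x = cls n w"
      unfolding signed_kernel_def by auto
    then show "x \<in> kernel (TVH n) (A_grp n) (psiH n)"
      unfolding kernel_def using signed_perm_id_iff[OF w(1)]
      by (simp add: TVH_memI psiH_cls cls_gamma_word_eq_one TVB_one)
  qed
qed

lemma psiH_xg: "1 \<le> k \<Longrightarrow> k \<le> n \<Longrightarrow> 1 \<le> l \<Longrightarrow> l \<le> n \<Longrightarrow> k \<noteq> l \<Longrightarrow> psiH n (xg n k l) = \<one>\<^bsub>TVB n\<^esub>"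
  unfolding xg_def by (simp add: psiH_cls xw_words TVB_one cls_gamma_word_eq_one sign_flips_def signed_perm_xw)

lemma psiH_image: "psiH n ` TVH_set n = A_set n"
  using A_set_subset_TVH psiH_in_A psiH_A by force

lemma kernel_psiH_Int_A: "kernel (TVH n) (A_grp n) (psiH n) \<inter> A_set n = {\<one>\<^bsub>TVB n\<^esub>}"
  unfolding TVH_def A_grp_def using A_subgroup A_set_subset_TVH psiH_A
  by (rule group.retraction_kernel_Int[OF group_TVB])

lemma kernel_psiH_mult_A: "kernel (TVH n) (A_grp n) (psiH n) <#>\<^bsub>TVB n\<^esub> A_set n = TVH_set n"
  using psiH_hom psiH_A unfolding TVH_def A_grp_def
  by (intro group.retraction_kernel_set_mult[OF group_TVB] TVH_subgroup A_subgroup A_set_subset_TVH)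

text \<open>The argument works for every \<open>n\<close>.\<close>
theorem mainTheorem11:
  fixes n :: nat
  assumes "n \<ge> 2"
  shows "\<exists>psi. psi \<in> hom (TVH n) (A_grp n)
           \<and> psi ` TVH_set n = A_set n
           \<and> (\<forall>k l. 1 \<le> k \<and> k \<le> n \<and> 1 \<le> l \<and> l \<le> n \<and> k \<noteq> l \<longrightarrow> psi (xg n k l) = \<one>\<^bsub>TVB n\<^esub>)
           \<and> (\<forall>j. 1 \<le> j \<and> j \<le> n \<longrightarrow> psi (gamma n j) = gamma n j)
           \<and> (\<forall>a\<in>A_set n. psi a = a)
           \<and> kernel (TVH n) (A_grp n) psi = generate (TVB n) (HL_gens n)
           \<and> kernel (TVH n) (A_grp n) psi \<lhd> TVH n
           \<and> A_set n \<subseteq> TVH_set n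
           \<and> kernel (TVH n) (A_grp n) psi \<inter> A_set n = {\<one>\<^bsub>TVB n\<^esub>}
           \<and> kernel (TVH n) (A_grp n) psi <#>\<^bsub>TVB n\<^esub> A_set n = TVH_set n"
proof -
  have "group_hom (TVH n) (A_grp n) (psiH n)"
    using group_TVH group_A_grp psiH_hom by (simp add: group_hom_def group_hom_axioms_def)
  then have normal: "kernel (TVH n) (A_grp n) (psiH n) \<lhd> TVH n"
    by (rule group_hom.normal_kernel)
  have gamma: "\<forall>j. 1 \<le> j \<and> j \<le> n \<longrightarrow> psiH n (gamma n j) = gamma n j"
    using gamma_in_A_set psiH_A by blast
  have xg: "\<forall>k l. 1 \<le> k \<and> k \<le> n \<and> 1 \<le> l \<and> l \<le> n \<and> k \<noteq> l \<longrightarrow> psiH n (xg n k l) = \<one>\<^bsub>TVB n\<^esub>"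
    using psiH_xg by blast
  have retract: "\<forall>a\<in>A_set n. psiH n a = a"
    using psiH_A by blast
  have kernel: "kernel (TVH n) (A_grp n) (psiH n) = generate (TVB n) (HL_gens n)"
    using kernel_psiH generate_HL_gens by simp
  show ?thesis
    by (intro exI[of _ "psiH n"] conjI psiH_hom psiH_image xg gamma retract kernel normal
        A_set_subset_TVH kernel_psiH_Int_A kernel_psiH_mult_A)
qed

end
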